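(* Let $\psi_{AB}$ be an $m$-dimensional noisy maximally entangled state with maximal correlation $\rho=\rho(\psi_{AB})<1$, let $0<\epsilon<1$, and let $P,Q\in\mathcal{H}_m^{\otimes n}$. Then $$\left|\mathrm{Tr}((P\otimes Q)\psi_{AB}^{\otimes n})-\mathrm{Tr}((\Delta_{1-\gamma}(P)\otimes\Delta_{1-\gamma}(Q))\psi_{AB}^{\otimes n})\right|\le2\epsilon\sqrt{\mathrm{Var}[P]\,\mathrm{Var}[Q]}$$ for every $0\le\gamma\le1-(1-\epsilon)^{\log\rho/(\log\epsilon+\log\rho)}$. In particular one can take $\gamma=C\frac{(1-\rho)\epsilon}{\log(1/\epsilon)}$ for an absolute constant $C$.
   Context: For $\rho'\in[0,1]$, the noise operator on one register is $\Delta_{\rho'}(P)=\rho' P+\frac{1-\rho'}{m}(\mathrm{Tr}P)\mathrm{id}_m$ for $P\in\mathcal{M}_m$; on $\mathcal{M}_m^{\otimes n}$, $\Delta_{\rho'}$ denotes the composition of this map applied to each of the $n$ registers. With $\langle X,Y\rangle=\frac1{m^n}\mathrm{Tr}X^\dagger Y$ on $\mathcal{M}_m^{\otimes n}$, $\mathrm{Var}[M]=\langle M,M\rangle-\langle M,\mathrm{id}\rangle\langle\mathrm{id},M\rangle$. A noisy maximally entangled state is a state $\psi_{AB}$ on $\mathbb{C}^m\otimes\mathbb{C}^m$ with $\psi_A=\psi_B=\mathrm{id}_m/m$ and maximal correlation $\rho(\psi_{AB})=\sup\{|\mathrm{Tr}((P^\dagger\otimes Q)\psi_{AB})|:\mathrm{Tr}P=\mathrm{Tr}Q=0,\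 \tfrac1m\mathrm{Tr}P^\dagger P=\tfrac1m\mathrm{Tr}Q^\dagger Q=1\}<1$. *)

theory Defs
  imports Complex_Main "HOL-Library.FuncSet"
begin

text \<open>The computational basis of C^m is indexed by {0..<m}.
  A basis index of the n-fold tensor power (C^m)^{\<otimes>n} is an extensional function
  {0..<n} \<rightarrow> {0..<m} (register k carries the k-th tensor factor).
  An operator on (C^m)^{\<otimes>n} is given by its matrix entries, a function
  of two such indices (only values on the index set matter).
  An operator on C^m \<otimes> C^m is a function of two index pairs (a,b).\<close>

type_synonym opn = "(nat \<Rightarrow> nat) \<Rightarrow> (nat \<Rightarrow> nat) \<Rightarrow> complex"
type_synonym op2 = "nat \<times> nat \<Rightarrow> nat \<times> nat \<Rightarrow> complex"
type_synonym op1 = "nat \<Rightarrow> nat \<Rightarrow> complex"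

definition idx :: "nat \<Rightarrow> nat \<Rightarrow> (nat \<Rightarrow> nat) set" where
  "idx m n = {0..<n} \<rightarrow>\<^sub>E {0..<m}"

definition hermitian_op :: "nat \<Rightarrow> nat \<Rightarrow> opn \<Rightarrow> bool" where
  "hermitian_op m n P \<longleftrightarrow> (\<forall>a\<in>idx m n. \<forall>b\<in>idx m n. P a b = cnj (P b a))"

definition trace_op :: "nat \<Rightarrow> nat \<Rightarrow> opn \<Rightarrow> complex" where
  "trace_op m n P = (\<Sum>a\<in>idx m n. P a a)"

definition inner_op :: "nat \<Rightarrow> nat \<Rightarrow> opn \<Rightarrow> opn \<Rightarrow> complex" where
  "inner_op m n X Y = (\<Sum>a\<in>idx m n. \<Sum>b\<in>idx m n. cnj (X b a) * Y b a) / of_nat (m ^ n)"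

definition id_op :: opn where
  "id_op = (\<lambda>a b. if a = b then 1 else 0)"

definition var_op :: "nat \<Rightarrow> nat \<Rightarrow> opn \<Rightarrow> real" where
  "var_op m n M = Re (inner_op m n M M - inner_op m n M id_op * inner_op m n id_op M)"

text \<open>Noise operator on register k:
  P \<mapsto> r P + (1-r)/m (Tr_k P) \<otimes> id_m (id_m in register k).\<close>
definition noise1 :: "nat \<Rightarrow> nat \<Rightarrow> real \<Rightarrow> opn \<Rightarrow> opn" where
  "noise1 m k r P = (\<lambda>a b. complex_of_real r * P a b
      + complex_of_real ((1 - r) / real m) *
        (if a k = b k then (\<Sum>c<m. P (a(k := c)) (b(k := c))) else 0))"

fun noise_upto :: "nat \<Rightarrow> nat \<Rightarrow> real \<Rightarrow> opn \<Rightarrow> opn" where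
  "noise_upto m 0 r P = P"
| "noise_upto m (Suc k) r P = noise1 m k r (noise_upto m k r P)"

definition noise :: "nat \<Rightarrow> nat \<Rightarrow> real \<Rightarrow> opn \<Rightarrow> opn" where
  "noise m n r P = noise_upto m n r P"

text \<open>Tr((P \<otimes> Q) \<psi>^{\<otimes>n}), where P acts on the A-registers A_1..A_n and Q on the
  B-registers B_1..B_n, and the k-th copy of \<psi> acts on A_k B_k.\<close>
definition corr_tr :: "nat \<Rightarrow> nat \<Rightarrow> opn \<Rightarrow> opn \<Rightarrow> op2 \<Rightarrow> complex" where
  "corr_tr m n P Q \<psi> =
     (\<Sum>a\<in>idx m n. \<Sum>b\<in>idx m n. \<Sum>a'\<in>idx m n. \<Sum>b'\<in>idx m n.
        P a a' * Q b b' * (\<Prod>k<n. \<psi> (a' k, b' k) (a k, b k)))"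

definition density2 :: "nat \<Rightarrow> op2 \<Rightarrow> bool" where
  "density2 m \<psi> \<longleftrightarrow>
     (\<forall>v :: nat \<times> nat \<Rightarrow> complex.
        let q = (\<Sum>x\<in>{0..<m}\<times>{0..<m}. \<Sum>y\<in>{0..<m}\<times>{0..<m}. cnj (v x) * \<psi> x y * v y)
        in Im q = 0 \<and> Re q \<ge> 0)
   \<and> (\<Sum>x\<in>{0..<m}\<times>{0..<m}. \<psi> x x) = 1"

definition ptrace_B :: "nat \<Rightarrow> op2 \<Rightarrow> op1" where
  "ptrace_B m \<psi> = (\<lambda>a a'. \<Sum>b<m. \<psi> (a, b) (a', b))"

definition ptrace_A :: "nat \<Rightarrow> op2 \<Rightarrow> op1" where
  "ptrace_A m \<psi> = (\<lambda>b b'. \<Sum>a<m. \<psi> (a, b) (a, b'))"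

definition maxmixed1 :: "nat \<Rightarrow> op1" where
  "maxmixed1 m = (\<lambda>a a'. if a = a' then 1 / of_nat m else 0)"

text \<open>We use the convention that the supremum of the
  empty family (which only happens for m = 1) is 0; since all values are \<ge> 0,
  adding 0 to the set does not change the supremum otherwise.\<close>
definition max_corr :: "nat \<Rightarrow> op2 \<Rightarrow> real" where
  "max_corr m \<psi> = Sup (insert 0 {cmod (\<Sum>a<m. \<Sum>b<m. \<Sum>a'<m. \<Sum>b'<m.
         cnj (P a' a) * Q b b' * \<psi> (a', b') (a, b)) | P Q :: op1.
       (\<Sum>a<m. P a a) = 0 \<and> (\<Sum>a<m. Q a a) = 0 \<and>
       (\<Sum>a<m. \<Sum>b<m. (cmod (P a b))\<^sup>2) / real m = 1 \<and>
       (\<Sum>a<m. \<Sum>b<m. (cmod (Q a b))\<^sup>2) / real m = 1})"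

definition noisy_max_ent :: "nat \<Rightarrow> op2 \<Rightarrow> bool" where
  "noisy_max_ent m \<psi> \<longleftrightarrow> density2 m \<psi> \<and>
     (\<forall>a<m. \<forall>a'<m. ptrace_B m \<psi> a a' = maxmixed1 m a a') \<and>
     (\<forall>b<m. \<forall>b'<m. ptrace_A m \<psi> b b' = maxmixed1 m b b') \<and>
     max_corr m \<psi> < 1"

text \<open>The admissible range 1 - (1-\<epsilon>)^{log \<rho> / (log \<epsilon> + log \<rho>)}; for \<rho> = 0 the exponent
  is read as its limit 1, giving \<epsilon>.\<close>
definition gamma_bound :: "real \<Rightarrow> real \<Rightarrow> real" where
  "gamma_bound \<rho> \<epsilon> = (if \<rho> = 0 then \<epsilon> else 1 - (1 - \<epsilon>) powr (ln \<rho> / (ln \<epsilon> + ln \<rho>)))"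

end

theory Submission
  imports Defs "HOL-Analysis.Convex"
begin

text \<open>Split \<open>P\<close> and \<open>Q\<close> into their Efron-Stein components \<open>P\<^sub>S\<close>, \<open>Q\<^sub>S\<close>, indexed by sets \<open>S\<close> of
  registers. The noise operator \<open>\<Delta>\<^sub>r\<close> multiplies the \<open>S\<close>-component by \<open>r\<^bsup>|S|\<^esup>\<close>, and components
  with different \<open>S\<close> stay orthogonal after contraction with \<open>\<psi>\<^bsup>\<otimes>n\<^esup>\<close>, so the difference of the
  two correlations is \<open>\<Sum>\<^sub>S\<^sub>\<noteq>\<^sub>{\<^sub>} (1 - r\<^bsup>2|S|\<^esup>) Tr ((P\<^sub>S \<otimes> Q\<^sub>S) \<psi>\<^bsup>\<otimes>n\<^esup>)\<close>.
  Contracting a traceless register against \<open>\<psi>\<close> shrinks the Frobenius norm by the maximal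
  correlation \<open>\<rho>\<close>, so the \<open>S\<close>-term is at most \<open>\<rho>\<^bsup>|S|\<^esup> (1 - r\<^bsup>2|S|\<^esup>) m\<^sup>-\<^sup>n \<parallel>P\<^sub>S\<parallel> \<parallel>Q\<^sub>S\<parallel>\<close>.
  Both choices of \<open>\<gamma>\<close> make \<open>\<rho>\<^sup>d (1 - (1 - \<gamma>)\<^bsup>2d\<^esup>) \<le> 2\<epsilon>\<close> for every \<open>d\<close>, and Cauchy-Schwarz together
  with \<open>Var[P] = m\<^sup>-\<^sup>n \<Sum>\<^sub>S\<^sub>\<noteq>\<^sub>{\<^sub>} \<parallel>P\<^sub>S\<parallel>\<^sup>2\<close> gives the bound.\<close>

section \<open>Scalar estimates\<close>

lemma gamma_bound_le_eps:
  assumes "0 < \<epsilon>" "\<epsilon> < 1" "0 \<le> \<rho>" "\<rho> < 1"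
  shows "gamma_bound \<rho> \<epsilon> \<le> \<epsilon>"
proof (cases "\<rho> = 0")
  case False
  then have "ln \<rho> < 0" "ln \<epsilon> < 0" using assms by simp_all
  then have "ln \<rho> / (ln \<epsilon> + ln \<rho>) \<le> 1" by (simp add: divide_le_eq)
  then have "(1 - \<epsilon>) powr 1 \<le> (1 - \<epsilon>) powr (ln \<rho> / (ln \<epsilon> + ln \<rho>))"
    by (intro powr_mono') (use assms in auto)
  then show ?thesis using False assms by (simp add: gamma_bound_def)
qed (simp add: gamma_bound_def)

lemma one_minus_eps_le_power_of_gamma_bound:
  assumes "0 < \<epsilon>" "\<epsilon> < 1" "0 \<le> \<rho>" "\<rho> < 1" "\<gamma> \<le> gamma_bound \<rho> \<epsilon>" "\<epsilon> < \<rho> ^ d"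
  shows "1 - \<epsilon> \<le> (1 - \<gamma>) ^ d"
proof (cases "\<rho> = 0")
  case True
  then show ?thesis using assms by (cases d) simp_all
next
  case False
  then have "0 < \<rho>" using assms by simp
  define e where "e = ln \<rho> / (ln \<epsilon> + ln \<rho>)"
  have l: "ln \<rho> < 0" "ln \<epsilon> < 0" using \<open>0 < \<rho>\<close> assms by simp_all
  have "ln \<epsilon> < real d * ln \<rho>"
    using \<open>0 < \<rho>\<close> assms ln_less_cancel_iff[of \<epsilon> "\<rho> ^ d"] by (simp add: ln_realpow)
  then have "ln \<rho> * real d / (ln \<epsilon> + ln \<rho>) \<le> 1"
    using l by (simp add: divide_le_eq mult.commute)
  then have ed: "e * real d \<le> 1" by (simp add: e_def)
  have "1 - \<epsilon> = (1 - \<epsilon>) powr 1" using assms by simp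
  also have "\<dots> \<le> (1 - \<epsilon>) powr (e * real d)"
    by (intro powr_mono') (use ed assms in auto)
  also have "\<dots> = ((1 - \<epsilon>) powr e) ^ d"
    using assms by (simp add: powr_realpow' powr_powr[symmetric] powr_def exp_of_nat_mult[symmetric] mult.commute)
  also have "\<dots> \<le> (1 - \<gamma>) ^ d"
    using False assms by (intro power_mono) (simp_all add: gamma_bound_def e_def)
  finally show ?thesis .
qed

text \<open>Either \<open>\<rho>\<^sup>d \<le> \<epsilon>\<close> already, or the choice of \<open>gamma_bound\<close> makes \<open>(1 - \<gamma>)\<^sup>d \<ge> 1 - \<epsilon>\<close>,
  whence \<open>1 - (1 - \<gamma>)\<^sup>2\<^sup>d \<le> 1 - (1 - \<epsilon>)\<^sup>2 \<le> 2\<epsilon>\<close>.\<close>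
lemma noise_gap_le_of_gamma_bound:
  assumes "0 < \<epsilon>" "\<epsilon> < 1" "0 \<le> \<rho>" "\<rho> < 1" "0 \<le> \<gamma>" "\<gamma> \<le> gamma_bound \<rho> \<epsilon>"
  shows "\<rho> ^ d * (1 - (1 - \<gamma>) ^ (2 * d)) \<le> 2 * \<epsilon>"
proof -
  have "\<gamma> \<le> \<epsilon>" using gamma_bound_le_eps assms by (meson order_trans)
  then have q: "0 \<le> (1 - \<gamma>) ^ (2 * d)" "(1 - \<gamma>) ^ (2 * d) \<le> 1"
    using assms by (simp_all add: power_le_one)
  have pd: "0 \<le> \<rho> ^ d" "\<rho> ^ d \<le> 1" using assms by (simp_all add: power_le_one)
  show ?thesis
  proof (cases "\<rho> ^ d \<le> \<epsilon>")
    case True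
    have "\<rho> ^ d * (1 - (1 - \<gamma>) ^ (2 * d)) \<le> \<rho> ^ d"
      using q pd by (simp add: mult_left_le)
    then show ?thesis using True assms by simp
  next
    case False
    then have b: "1 - \<epsilon> \<le> (1 - \<gamma>) ^ d"
      using one_minus_eps_le_power_of_gamma_bound False assms by simp
    have "(1 - \<epsilon>)\<^sup>2 \<le> ((1 - \<gamma>) ^ d)\<^sup>2" by (rule power_mono[OF b]) (use assms in simp)
    moreover have "((1 - \<gamma>) ^ d)\<^sup>2 = (1 - \<gamma>) ^ (2 * d)" by (simp add: power_mult mult.commute)
    moreover have "(1 - \<epsilon>)\<^sup>2 = 1 - 2 * \<epsilon> + \<epsilon>\<^sup>2" by (simp add: power2_diff)
    ultimately have "1 - (1 - \<gamma>) ^ (2 * d) \<le> 2 * \<epsilon>" by (smt (verit) zero_le_power2)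
    then have "\<rho> ^ d * (1 - (1 - \<gamma>) ^ (2 * d)) \<le> 1 * (2 * \<epsilon>)"
      using pd q by (intro mult_mono) simp_all
    then show ?thesis by simp
  qed
qed

lemma of_nat_mult_power_mult_one_minus_le:
  assumes "0 \<le> (\<rho>::real)" "\<rho> \<le> 1"
  shows "real d * \<rho> ^ d * (1 - \<rho>) \<le> 1"
proof -
  have "real d * \<rho> ^ d = (\<Sum>i<d. \<rho> ^ d)" by simp
  also have "\<dots> \<le> (\<Sum>i<d. \<rho> ^ i)"
    by (rule sum_mono) (use assms in \<open>auto intro: power_decreasing\<close>)
  finally have "real d * \<rho> ^ d * (1 - \<rho>) \<le> (\<Sum>i<d. \<rho> ^ i) * (1 - \<rho>)"
    by (rule mult_right_mono) (use assms in simp)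
  also have "\<dots> = 1 - \<rho> ^ d" using one_diff_power_eq[of \<rho> d] by (simp add: mult.commute)
  also have "\<dots> \<le> 1" using assms by simp
  finally show ?thesis .
qed

text \<open>For \<open>\<epsilon> < 1/2\<close>: Bernoulli gives \<open>1 - (1 - \<gamma>)\<^sup>2\<^sup>d \<le> 2d\<gamma>\<close>, and \<open>d \<rho>\<^sup>d (1 - \<rho>) \<le> 1 \<le> 2 ln (1/\<epsilon>)\<close>.\<close>
lemma noise_gap_le_of_log_rate:
  fixes \<epsilon> \<rho> \<gamma> :: real
  assumes "0 < \<epsilon>" "\<epsilon> < 1" "0 \<le> \<rho>" "\<rho> < 1" "0 \<le> \<gamma>" "\<gamma> \<le> 1"
    and \<gamma>: "\<gamma> = (1 - \<rho>) * \<epsilon> / (2 * ln (1 / \<epsilon>))"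
  shows "\<rho> ^ d * (1 - (1 - \<gamma>) ^ (2 * d)) \<le> 2 * \<epsilon>"
proof -
  define L where "L = ln (1 / \<epsilon>)"
  have L: "0 < L" using assms by (simp add: L_def)
  have q: "0 \<le> (1 - \<gamma>) ^ (2 * d)" "(1 - \<gamma>) ^ (2 * d) \<le> 1"
    using assms by (simp_all add: power_le_one)
  have pd: "0 \<le> \<rho> ^ d" "\<rho> ^ d \<le> 1" using assms by (simp_all add: power_le_one)
  show ?thesis
  proof (cases "\<epsilon> \<ge> 1/2")
    case True
    have "\<rho> ^ d * (1 - (1 - \<gamma>) ^ (2 * d)) \<le> 1" using q pd by (intro mult_le_one) simp_all
    then show ?thesis using True by linarith
  next
    case False
    have "(1/2::real) \<le> ln 2" using ln_le_cancel_iff[of "exp (1/2)" 2] exp_half_le2 by simp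
    also have "\<dots> \<le> L" unfolding L_def using False assms by (intro ln_mono) (simp_all add: field_simps)
    finally have Lh: "1/2 \<le> L" .
    have "1 - 2 * real d * \<gamma> \<le> (1 - \<gamma>) ^ (2 * d)"
      using Bernoulli_inequality[of "-\<gamma>" "2 * d"] assms by simp
    then have "\<rho> ^ d * (1 - (1 - \<gamma>) ^ (2 * d)) \<le> \<rho> ^ d * (2 * real d * \<gamma>)"
      using pd by (intro mult_left_mono) simp_all
    also have "\<dots> = 2 * \<epsilon> * ((real d * \<rho> ^ d * (1 - \<rho>)) / (2 * L))"
      using L by (simp add: \<gamma> L_def field_simps)
    also have "\<dots> \<le> 2 * \<epsilon> * 1"
      using of_nat_mult_power_mult_one_minus_le[of \<rho> d] assms Lh L
      by (intro mult_left_mono) (simp_all add: field_simps)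
    finally show ?thesis by simp
  qed
qed

section \<open>Index sets and finite sums\<close>

lemma idx_upd: "a \<in> idx m n \<Longrightarrow> k < n \<Longrightarrow> c < m \<Longrightarrow> a(k:=c) \<in> idx m n"
  by (auto simp: idx_def PiE_iff extensional_def)

lemma idx_less: "a \<in> idx m n \<Longrightarrow> k < n \<Longrightarrow> a k < m"
  by (auto simp: idx_def PiE_iff)

lemma idx_undefined: "a \<in> idx m n \<Longrightarrow> \<not> k < n \<Longrightarrow> a k = undefined"
  by (auto simp: idx_def PiE_iff extensional_def)

lemma idx_eqI: "a \<in> idx m n \<Longrightarrow> b \<in> idx m n \<Longrightarrow> (\<forall>k<n. a k = b k) \<Longrightarrow> a = b"
proof (rule ext)
  fix k assume "a \<in> idx m n" "b \<in> idx m n" "\<forall>k<n. a k = b k"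
  thus "a k = b k" by (cases "k < n") (simp_all add: idx_undefined)
qed

lemma finite_idx[simp]: "finite (idx m n)"
  by (simp add: idx_def finite_PiE)

lemma card_idx: "card (idx m n) = m ^ n"
  by (simp add: idx_def card_PiE)

lemma sum_idx_split:
  assumes "k < n"
  shows "(\<Sum>a\<in>idx m n. g a) = (\<Sum>a\<in>{a\<in>idx m n. a k = 0}. \<Sum>c<m. g (a(k:=c)))"
proof -
  let ?A = "{a\<in>idx m n. a k = 0} \<times> {..<m}"
  let ?h = "\<lambda>(a::nat\<Rightarrow>nat, c::nat). a(k:=c)"
  have inj: "inj_on ?h ?A"
  proof (rule inj_onI, clarify)
    fix a c a' c'
    assume h: "a(k:=c) = a'(k:=c')" "a k = 0" "a' k = 0"
    hence "c = c'" by (metis fun_upd_same)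
    moreover have "a = a'"
    proof
      fix x show "a x = a' x" using h by (cases "x = k") (auto dest: fun_cong[where x=x])
    qed
    ultimately show "a = a' \<and> c = c'" by simp
  qed
  have img: "?h ` ?A = idx m n"
  proof
    show "?h ` ?A \<subseteq> idx m n" using assms by (auto intro: idx_upd)
  next
    show "idx m n \<subseteq> ?h ` ?A"
    proof
      fix b assume b: "b \<in> idx m n"
      have bk: "b k < m" using idx_less[OF b assms] .
      have "b(k:=0) \<in> idx m n" using idx_upd[OF b assms, of 0] bk by simp
      moreover have "b = ?h (b(k:=0), b k)" by simp
      ultimately show "b \<in> ?h ` ?A" using bk by (intro image_eqI) auto
    qed
  qed
  have "(\<Sum>a\<in>idx m n. g a) = (\<Sum>x\<in>?A. g (?h x))"
    using sum.reindex[OF inj, of g] img by (simp add: comp_def)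
  also have "\<dots> = (\<Sum>a\<in>{a\<in>idx m n. a k = 0}. \<Sum>c<m. g (a(k:=c)))"
    by (simp add: sum.cartesian_product split_def)
  finally show ?thesis .
qed

lemma sum_idx2_split:
  assumes "k < n"
  shows "(\<Sum>b\<in>idx m n. \<Sum>b'\<in>idx m n. F b b') =
    (\<Sum>b\<in>{a\<in>idx m n. a k = 0}. \<Sum>b'\<in>{a\<in>idx m n. a k = 0}. \<Sum>c<m. \<Sum>c'<m. F (b(k:=c)) (b'(k:=c')))"
proof -
  have "(\<Sum>b\<in>idx m n. \<Sum>b'\<in>idx m n. F b b') = (\<Sum>b\<in>{a\<in>idx m n. a k = 0}. \<Sum>c<m. \<Sum>b'\<in>idx m n. F (b(k:=c)) b')"
    by (rule sum_idx_split[OF assms])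
  also have "\<dots> = (\<Sum>b\<in>{a\<in>idx m n. a k = 0}. \<Sum>c<m. \<Sum>b'\<in>{a\<in>idx m n. a k = 0}. \<Sum>c'<m. F (b(k:=c)) (b'(k:=c')))"
    by (intro sum.cong refl sum_idx_split[OF assms])
  also have "\<dots> = (\<Sum>b\<in>{a\<in>idx m n. a k = 0}. \<Sum>b'\<in>{a\<in>idx m n. a k = 0}. \<Sum>c<m. \<Sum>c'<m. F (b(k:=c)) (b'(k:=c')))"
    by (intro sum.cong refl sum.swap)
  finally show ?thesis .
qed

lemma sum_idx_Suc: "(\<Sum>c\<in>idx m (Suc j). F c) = (\<Sum>y<m. \<Sum>g\<in>idx m j. F (g(j:=y)))"
proof -
  have e: "idx m (Suc j) = (\<lambda>(y, g). g(j := y)) ` ({0..<m} \<times> idx m j)"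
    unfolding idx_def by (simp add: atLeast0_lessThan_Suc PiE_insert_eq)
  have inj: "inj_on (\<lambda>(y, g). g(j := y)) ({0..<m} \<times> idx m j)"
    unfolding idx_def using inj_combinator[of j "{0..<j}" "\<lambda>_. {0..<m}"] by simp
  have "(\<Sum>c\<in>idx m (Suc j). F c) = (\<Sum>x\<in>{0..<m} \<times> idx m j. F ((\<lambda>(y, g). g(j := y)) x))"
    unfolding e by (rule sum.reindex[OF inj, unfolded comp_def])
  also have "\<dots> = (\<Sum>(y,g)\<in>{..<m} \<times> idx m j. F (g(j:=y)))"
    by (simp add: split_def atLeast0LessThan)
  also have "\<dots> = (\<Sum>y<m. \<Sum>g\<in>idx m j. F (g(j:=y)))"
    by (rule sum.cartesian_product[symmetric])
  finally show ?thesis .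
qed

lemma sum_swap3: "(\<Sum>c\<in>A. \<Sum>d\<in>B. \<Sum>e\<in>C. f c d e) = (\<Sum>d\<in>B. \<Sum>e\<in>C. \<Sum>c\<in>A. f c d e)"
proof -
  have "(\<Sum>c\<in>A. \<Sum>d\<in>B. \<Sum>e\<in>C. f c d e) = (\<Sum>d\<in>B. \<Sum>c\<in>A. \<Sum>e\<in>C. f c d e)" by (rule sum.swap)
  also have "\<dots> = (\<Sum>d\<in>B. \<Sum>e\<in>C. \<Sum>c\<in>A. f c d e)" by (rule sum.cong[OF refl], rule sum.swap)
  finally show ?thesis .
qed

lemma sum_swap22: "(\<Sum>a\<in>A. \<Sum>a'\<in>B. \<Sum>c\<in>C. \<Sum>c'\<in>D. G a a' c c') = (\<Sum>c\<in>C. \<Sum>c'\<in>D. \<Sum>a\<in>A. \<Sum>a'\<in>B. G a a' c c')"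
proof -
  have "(\<Sum>a\<in>A. \<Sum>a'\<in>B. \<Sum>c\<in>C. \<Sum>c'\<in>D. G a a' c c') = (\<Sum>a\<in>A. \<Sum>c\<in>C. \<Sum>a'\<in>B. \<Sum>c'\<in>D. G a a' c c')"
    by (intro sum.cong refl sum.swap)
  also have "\<dots> = (\<Sum>c\<in>C. \<Sum>a\<in>A. \<Sum>a'\<in>B. \<Sum>c'\<in>D. G a a' c c')" by (rule sum.swap)
  also have "\<dots> = (\<Sum>c\<in>C. \<Sum>a\<in>A. \<Sum>c'\<in>D. \<Sum>a'\<in>B. G a a' c c')" by (intro sum.cong refl sum.swap)
  also have "\<dots> = (\<Sum>c\<in>C. \<Sum>c'\<in>D. \<Sum>a\<in>A. \<Sum>a'\<in>B. G a a' c c')" by (intro sum.cong refl sum.swap)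
  finally show ?thesis .
qed

lemma sum_swap4: "(\<Sum>a\<in>A. \<Sum>b\<in>B. \<Sum>a'\<in>C. \<Sum>b'\<in>D. f a b a' b') = (\<Sum>b\<in>B. \<Sum>b'\<in>D. \<Sum>a\<in>A. \<Sum>a'\<in>C. f a b a' b')"
proof -
  have "(\<Sum>a\<in>A. \<Sum>b\<in>B. \<Sum>a'\<in>C. \<Sum>b'\<in>D. f a b a' b') = (\<Sum>a\<in>A. \<Sum>a'\<in>C. \<Sum>b\<in>B. \<Sum>b'\<in>D. f a b a' b')"
    by (intro sum.cong refl sum.swap)
  also have "\<dots> = (\<Sum>b\<in>B. \<Sum>b'\<in>D. \<Sum>a\<in>A. \<Sum>a'\<in>C. f a b a' b')"
    by (rule sum_swap22)
  finally show ?thesis .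
qed

lemma sum_delta2:
  assumes "finite A" "finite B" "x \<in> A" "y \<in> B"
  shows "(\<Sum>c\<in>A. \<Sum>c'\<in>B. if x = c \<and> y = c' then f c c' else 0) = f x y"
proof -
  have "(\<Sum>c\<in>A. \<Sum>c'\<in>B. if x = c \<and> y = c' then f c c' else 0) = (\<Sum>c\<in>A. if x = c then f c y else 0)"
    using assms by (intro sum.cong refl) (auto simp: sum.delta)
  also have "\<dots> = f x y" using assms by (simp add: sum.delta)
  finally show ?thesis .
qed

lemma sum_sum_offdiag_zero:
  assumes "\<And>S T. S \<in> I \<Longrightarrow> T \<in> I \<Longrightarrow> S \<noteq> T \<Longrightarrow> f S T = (0::'b::comm_monoid_add)" "finite I"
  shows "(\<Sum>S\<in>I. \<Sum>T\<in>I. f S T) = (\<Sum>S\<in>I. f S S)"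
proof (intro sum.cong refl)
  fix S assume S: "S \<in> I"
  have "(\<Sum>T\<in>I. f S T) = (\<Sum>T\<in>I. if T = S then f S S else 0)"
    using assms(1)[OF S] by (intro sum.cong refl) auto
  also have "\<dots> = f S S" using S assms(2) by simp
  finally show "(\<Sum>T\<in>I. f S T) = f S S" .
qed

lemma sum_sqrt_mult_le:
  fixes f g :: "'a \<Rightarrow> real"
  assumes "\<And>i. i \<in> A \<Longrightarrow> 0 \<le> f i" "\<And>i. i \<in> A \<Longrightarrow> 0 \<le> g i"
  shows "(\<Sum>i\<in>A. sqrt (f i) * sqrt (g i)) \<le> sqrt (\<Sum>i\<in>A. f i) * sqrt (\<Sum>i\<in>A. g i)"
proof -
  have "(\<Sum>i\<in>A. sqrt (f i) * sqrt (g i))\<^sup>2 \<le> (\<Sum>i\<in>A. (sqrt (f i))\<^sup>2) * (\<Sum>i\<in>A. (sqrt (g i))\<^sup>2)"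
    by (rule Cauchy_Schwarz_ineq_sum)
  also have "\<dots> = (\<Sum>i\<in>A. f i) * (\<Sum>i\<in>A. g i)" using assms by simp
  finally have "(\<Sum>i\<in>A. sqrt (f i) * sqrt (g i))\<^sup>2 \<le> (\<Sum>i\<in>A. f i) * (\<Sum>i\<in>A. g i)" .
  hence "\<bar>\<Sum>i\<in>A. sqrt (f i) * sqrt (g i)\<bar> \<le> sqrt ((\<Sum>i\<in>A. f i) * (\<Sum>i\<in>A. g i))"
    using real_le_rsqrt real_sqrt_abs by (metis real_sqrt_le_mono)
  thus ?thesis by (simp add: real_sqrt_mult)
qed

section \<open>Register averages and the Efron-Stein decomposition\<close>

text \<open>\<open>reg_avg m k X = (Tr\<^sub>k X) \<otimes> id\<^sub>m / m\<close>: the conditional expectation onto operators acting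
  trivially on register \<open>k\<close>.\<close>
definition reg_avg :: "nat \<Rightarrow> nat \<Rightarrow> opn \<Rightarrow> opn" where
  "reg_avg m k X = (\<lambda>a b. if a k = b k then (\<Sum>c<m. X (a(k:=c)) (b(k:=c))) / of_nat m else 0)"

lemma noise1_reg_avg: "noise1 m k r X = (\<lambda>a b. complex_of_real r * X a b + complex_of_real (1 - r) * reg_avg m k X a b)"
  by (auto simp: noise1_def reg_avg_def fun_eq_iff)

lemma reg_avg_commute:
  assumes "j \<noteq> k"
  shows "reg_avg m j (reg_avg m k X) = reg_avg m k (reg_avg m j X)"
proof (intro ext)
  fix a b :: "nat \<Rightarrow> nat"
  have upd: "\<And>c d. a(j:=c, k:=d) = a(k:=d, j:=c)" "\<And>c d. b(j:=c, k:=d) = b(k:=d, j:=c)"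
    by (rule fun_upd_twist[OF assms])+
  have s1: "reg_avg m j (reg_avg m k X) a b = (if a j = b j \<and> a k = b k then (\<Sum>c<m. \<Sum>d<m. X (a(j:=c, k:=d)) (b(j:=c, k:=d))) / of_nat m / of_nat m else 0)"
    unfolding reg_avg_def using assms by (simp add: sum_divide_distrib)
  have s2: "reg_avg m k (reg_avg m j X) a b = (if a j = b j \<and> a k = b k then (\<Sum>d<m. \<Sum>c<m. X (a(k:=d, j:=c)) (b(k:=d, j:=c))) / of_nat m / of_nat m else 0)"
    unfolding reg_avg_def using assms by (auto simp add: sum_divide_distrib)
  show "reg_avg m j (reg_avg m k X) a b = reg_avg m k (reg_avg m j X) a b"
    unfolding s1 s2 upd using sum.swap[where A="{..<m}" and B="{..<m}" and g="\<lambda>c d. X (a(k:=d, j:=c)) (b(k:=d, j:=c))"] by simp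
qed

lemma reg_avg_idem: "reg_avg m k (reg_avg m k X) = reg_avg m k X"
proof (intro ext)
  fix a b :: "nat \<Rightarrow> nat"
  show "reg_avg m k (reg_avg m k X) a b = reg_avg m k X a b"
  proof (cases "a k = b k \<and> m > 0")
    case True
    have "reg_avg m k (reg_avg m k X) a b = (\<Sum>c<m. (\<Sum>d<m. X (a(k:=d)) (b(k:=d))) / of_nat m) / of_nat m"
      using True by (simp add: reg_avg_def)
    also have "\<dots> = (\<Sum>d<m. X (a(k:=d)) (b(k:=d))) / of_nat m"
      using True by simp
    finally show ?thesis using True by (simp add: reg_avg_def)
  next
    case False
    thus ?thesis by (auto simp: reg_avg_def)
  qed
qed

lemma reg_avg_diff: "reg_avg m k (\<lambda>a b. X a b - Y a b) = (\<lambda>a b. reg_avg m k X a b - reg_avg m k Y a b)"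
  by (auto simp: reg_avg_def fun_eq_iff sum_subtractf diff_divide_distrib)

lemma reg_avg_zero: "reg_avg m k (\<lambda>a b. 0) = (\<lambda>a b. 0)"
  by (auto simp: reg_avg_def fun_eq_iff)

lemma reg_avg_sum: "reg_avg m k (\<lambda>a b. \<Sum>i\<in>I. f i a b) = (\<lambda>a b. \<Sum>i\<in>I. reg_avg m k (f i) a b)"
proof (intro ext)
  fix a b :: "nat \<Rightarrow> nat"
  show "reg_avg m k (\<lambda>a b. \<Sum>i\<in>I. f i a b) a b = (\<Sum>i\<in>I. reg_avg m k (f i) a b)"
  proof (cases "a k = b k")
    case True
    thus ?thesis unfolding reg_avg_def using sum.swap[where g="\<lambda>c i. f i (a(k:=c)) (b(k:=c))" and A="{..<m}" and B=I]
      by (simp add: sum_divide_distrib)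
  qed (simp add: reg_avg_def)
qed

lemma reg_avg_scale: "reg_avg m k (\<lambda>a b. c * X a b) = (\<lambda>a b. c * reg_avg m k X a b)"
  by (auto simp: reg_avg_def fun_eq_iff sum_distrib_left)

lemma reg_avg_cnj: "reg_avg m k (\<lambda>a b. cnj (X a b)) = (\<lambda>a b. cnj (reg_avg m k X a b))"
  by (auto simp: reg_avg_def fun_eq_iff)

definition eq_on_idx :: "nat \<Rightarrow> nat \<Rightarrow> opn \<Rightarrow> opn \<Rightarrow> bool" where
  "eq_on_idx m n X Y \<longleftrightarrow> (\<forall>a\<in>idx m n. \<forall>b\<in>idx m n. X a b = Y a b)"

lemma eq_on_idx_sym: "eq_on_idx m n X Y \<Longrightarrow> eq_on_idx m n Y X"
  unfolding eq_on_idx_def by simp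

definition traceless_at :: "nat \<Rightarrow> nat \<Rightarrow> nat \<Rightarrow> opn \<Rightarrow> bool" where
  "traceless_at m n k X \<longleftrightarrow> (\<forall>a\<in>idx m n. \<forall>b\<in>idx m n. reg_avg m k X a b = 0)"

definition trivial_at :: "nat \<Rightarrow> nat \<Rightarrow> nat \<Rightarrow> opn \<Rightarrow> bool" where
  "trivial_at m n k X \<longleftrightarrow> (\<forall>a\<in>idx m n. \<forall>b\<in>idx m n. reg_avg m k X a b = X a b)"

lemma eq_on_idx_reg_avg: "eq_on_idx m n X Y \<Longrightarrow> k < n \<Longrightarrow> eq_on_idx m n (reg_avg m k X) (reg_avg m k Y)"
  unfolding eq_on_idx_def reg_avg_def by (auto intro!: sum.cong simp: idx_upd)

lemma traceless_at_cong: "eq_on_idx m n X Y \<Longrightarrow> k < n \<Longrightarrow> traceless_at m n k X \<Longrightarrow> traceless_at m n k Y"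
  using eq_on_idx_reg_avg[of m n X Y k] unfolding traceless_at_def eq_on_idx_def by metis

lemma trivial_at_cong: "eq_on_idx m n X Y \<Longrightarrow> k < n \<Longrightarrow> trivial_at m n k X \<Longrightarrow> trivial_at m n k Y"
  using eq_on_idx_reg_avg[of m n X Y k] unfolding trivial_at_def eq_on_idx_def by metis

definition frob_sq :: "nat \<Rightarrow> nat \<Rightarrow> opn \<Rightarrow> real" where
  "frob_sq m n X = (\<Sum>a\<in>idx m n. \<Sum>b\<in>idx m n. (cmod (X a b))\<^sup>2)"

lemma frob_sq_cong: "eq_on_idx m n X Y \<Longrightarrow> frob_sq m n X = frob_sq m n Y"
  unfolding eq_on_idx_def frob_sq_def by (intro sum.cong refl) auto

lemma frob_sq_nonneg: "0 \<le> frob_sq m n X"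
  unfolding frob_sq_def by (intro sum_nonneg) auto

lemma frob_sq_divide: "frob_sq m n (\<lambda>a b. X a b / of_nat m) = (1 / real m)\<^sup>2 * frob_sq m n X"
  unfolding frob_sq_def by (simp add: sum_distrib_left norm_divide power_divide)

definition pairing :: "nat \<Rightarrow> nat \<Rightarrow> opn \<Rightarrow> opn \<Rightarrow> complex" where
  "pairing m n Y Z = (\<Sum>a\<in>idx m n. \<Sum>b\<in>idx m n. Y a b * Z a b)"

lemma pairing_commute: "pairing m n Y Z = pairing m n Z Y"
  unfolding pairing_def by (simp add: mult.commute)

lemma pairing_cong: "eq_on_idx m n Y Y' \<Longrightarrow> eq_on_idx m n Z Z' \<Longrightarrow> pairing m n Y Z = pairing m n Y' Z'"
  unfolding pairing_def eq_on_idx_def by (intro sum.cong refl) auto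

lemma pairing_sum_left: "pairing m n (\<lambda>a b. \<Sum>S\<in>I. g S * Y S a b) Z = (\<Sum>S\<in>I. g S * pairing m n (Y S) Z)"
proof -
  have "pairing m n (\<lambda>a b. \<Sum>S\<in>I. g S * Y S a b) Z = (\<Sum>a\<in>idx m n. \<Sum>b\<in>idx m n. \<Sum>S\<in>I. g S * (Y S a b * Z a b))"
    unfolding pairing_def by (simp add: sum_distrib_right sum_distrib_left mult_ac)
  also have "\<dots> = (\<Sum>S\<in>I. \<Sum>a\<in>idx m n. \<Sum>b\<in>idx m n. g S * (Y S a b * Z a b))"
    by (rule sum_swap3[symmetric])
  also have "\<dots> = (\<Sum>S\<in>I. g S * pairing m n (Y S) Z)"
    unfolding pairing_def by (simp add: sum_distrib_left)
  finally show ?thesis .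
qed

lemma pairing_sum_right: "pairing m n Z (\<lambda>a b. \<Sum>S\<in>I. g S * Y S a b) = (\<Sum>S\<in>I. g S * pairing m n Z (Y S))"
  using pairing_sum_left[of m n g Y I Z] by (simp add: pairing_commute[of m n Z])

lemma norm_pairing_le: "cmod (pairing m n Y Z) \<le> sqrt (frob_sq m n Y) * sqrt (frob_sq m n Z)"
proof -
  have "cmod (pairing m n Y Z) = cmod (\<Sum>x\<in>idx m n \<times> idx m n. Y (fst x) (snd x) * Z (fst x) (snd x))"
    unfolding pairing_def by (simp add: sum.cartesian_product split_def)
  also have "\<dots> \<le> (\<Sum>x\<in>idx m n \<times> idx m n. sqrt ((cmod (Y (fst x) (snd x)))\<^sup>2) * sqrt ((cmod (Z (fst x) (snd x)))\<^sup>2))"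
    by (rule order_trans[OF norm_sum]) (simp add: norm_mult)
  also have "\<dots> \<le> sqrt (\<Sum>x\<in>idx m n \<times> idx m n. (cmod (Y (fst x) (snd x)))\<^sup>2) * sqrt (\<Sum>x\<in>idx m n \<times> idx m n. (cmod (Z (fst x) (snd x)))\<^sup>2)"
    by (rule sum_sqrt_mult_le) auto
  also have "\<dots> = sqrt (frob_sq m n Y) * sqrt (frob_sq m n Z)"
    unfolding frob_sq_def by (simp add: sum.cartesian_product split_def)
  finally show ?thesis .
qed

lemma pairing_reg_avg_eq:
  assumes k: "k < n"
  shows "pairing m n Y (reg_avg m k Z) = (\<Sum>b\<in>{a\<in>idx m n. a k = 0}. \<Sum>b'\<in>{a\<in>idx m n. a k = 0}.
    (\<Sum>c<m. Y (b(k:=c)) (b'(k:=c))) * (\<Sum>d<m. Z (b(k:=d)) (b'(k:=d))) / of_nat m)"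
  unfolding pairing_def sum_idx2_split[OF k]
proof (intro sum.cong refl)
  fix b b' :: "nat \<Rightarrow> nat" assume "b \<in> {a\<in>idx m n. a k = 0}" "b' \<in> {a\<in>idx m n. a k = 0}"
  define W where "W = (\<Sum>d<m. Z (b(k:=d)) (b'(k:=d))) / of_nat m"
  have "(\<Sum>c<m. \<Sum>c'<m. Y (b(k:=c)) (b'(k:=c')) * reg_avg m k Z (b(k:=c)) (b'(k:=c'))) =
        (\<Sum>c<m. \<Sum>c'<m. if c = c' then Y (b(k:=c)) (b'(k:=c')) * W else 0)"
    unfolding reg_avg_def W_def by (intro sum.cong refl) simp
  also have "\<dots> = (\<Sum>c<m. Y (b(k:=c)) (b'(k:=c)) * W)"
    by (intro sum.cong refl) (simp add: sum.delta)
  also have "\<dots> = (\<Sum>c<m. Y (b(k:=c)) (b'(k:=c))) * W"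
    by (simp add: sum_distrib_right)
  also have "\<dots> = (\<Sum>c<m. Y (b(k:=c)) (b'(k:=c))) * (\<Sum>d<m. Z (b(k:=d)) (b'(k:=d))) / of_nat m"
    unfolding W_def by simp
  finally show "(\<Sum>c<m. \<Sum>c'<m. Y (b(k:=c)) (b'(k:=c')) * reg_avg m k Z (b(k:=c)) (b'(k:=c'))) =
        (\<Sum>c<m. Y (b(k:=c)) (b'(k:=c))) * (\<Sum>d<m. Z (b(k:=d)) (b'(k:=d))) / of_nat m" .
qed

lemma pairing_reg_avg: "k < n \<Longrightarrow> pairing m n Y (reg_avg m k Z) = pairing m n (reg_avg m k Y) Z"
  using pairing_reg_avg_eq[of k n m Y Z] pairing_reg_avg_eq[of k n m Z Y] pairing_commute[of m n "reg_avg m k Y" Z]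
  by (simp add: mult.commute)

lemma pairing_traceless_trivial:
  assumes k: "k < n" and Y: "traceless_at m n k Y" and Z: "trivial_at m n k Z"
  shows "pairing m n Y Z = 0"
proof -
  have "pairing m n Y Z = pairing m n Y (reg_avg m k Z)"
    by (rule pairing_cong) (use Z in \<open>auto simp: eq_on_idx_def trivial_at_def\<close>)
  also have "\<dots> = pairing m n (reg_avg m k Y) Z" by (rule pairing_reg_avg[OF k])
  also have "\<dots> = pairing m n (\<lambda>a b. 0) Z"
    by (rule pairing_cong) (use Y in \<open>auto simp: eq_on_idx_def traceless_at_def\<close>)
  finally show ?thesis by (simp add: pairing_def)
qed

definition es_support :: "nat \<Rightarrow> nat \<Rightarrow> nat set \<Rightarrow> opn \<Rightarrow> bool" where
  "es_support m n S Y \<longleftrightarrow> (\<forall>k\<in>S. traceless_at m n k Y) \<and> (\<forall>k\<in>{..<n}-S. trivial_at m n k Y)"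

lemma es_support_cong:
  assumes "eq_on_idx m n X Y" "S \<subseteq> {..<n}" "es_support m n S X"
  shows "es_support m n S Y"
  using assms traceless_at_cong trivial_at_cong unfolding es_support_def by blast

lemma es_support_cnj: "es_support m n S Y \<Longrightarrow> es_support m n S (\<lambda>a b. cnj (Y a b))"
  unfolding es_support_def traceless_at_def trivial_at_def reg_avg_cnj by simp

lemma pairing_es_support_orthogonal:
  assumes "S \<subseteq> {..<n}" "T \<subseteq> {..<n}" "S \<noteq> T" "es_support m n S Y" "es_support m n T Z"
  shows "pairing m n Y Z = 0"
proof -
  obtain k where k: "k \<in> S - T \<or> k \<in> T - S" using assms(3) by blast
  show ?thesis
  proof (cases "k \<in> S - T")
    case True
    hence "k < n" "traceless_at m n k Y" "trivial_at m n k Z" using assms unfolding es_support_def by auto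
    thus ?thesis by (rule pairing_traceless_trivial)
  next
    case False
    hence "k \<in> T - S" using k by blast
    hence "k < n" "traceless_at m n k Z" "trivial_at m n k Y" using assms unfolding es_support_def by auto
    thus ?thesis using pairing_traceless_trivial pairing_commute by metis
  qed
qed

text \<open>\<open>es_comp m S n X\<close> is the Efron-Stein component
  \<open>X\<^sub>S = (\<Prod>\<^sub>k\<^sub>\<in>\<^sub>S (1 - E\<^sub>k)) (\<Prod>\<^sub>k\<^sub>\<notin>\<^sub>S E\<^sub>k) X\<close> with \<open>E\<^sub>k = reg_avg m k\<close>.\<close>
fun es_comp :: "nat \<Rightarrow> nat set \<Rightarrow> nat \<Rightarrow> opn \<Rightarrow> opn" where
  "es_comp m S 0 X = X"
| "es_comp m S (Suc j) X = (if j \<in> S then (\<lambda>a b. es_comp m S j X a b - reg_avg m j (es_comp m S j X) a b) else reg_avg m j (es_comp m S j X))"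

lemma es_comp_cong: "(\<forall>k<j. k \<in> S \<longleftrightarrow> k \<in> S') \<Longrightarrow> es_comp m S j X = es_comp m S' j X"
  by (induction j) auto

lemma sum_Pow_Suc: "(\<Sum>S\<in>Pow {..<Suc j}. f S) = (\<Sum>S\<in>Pow {..<j}. f S + f (insert j S))"
proof -
  have P: "Pow {..<Suc j} = Pow {..<j} \<union> insert j ` Pow {..<j}"
    by (simp add: lessThan_Suc Pow_insert)
  have d: "Pow {..<j} \<inter> insert j ` Pow {..<j} = {}" by auto
  have inj: "inj_on (insert j) (Pow {..<j})"
    by (rule inj_onI) (metis PowD insert_ident lessThan_iff less_irrefl subsetD)
  have "(\<Sum>S\<in>Pow {..<Suc j}. f S) = (\<Sum>S\<in>Pow {..<j}. f S) + (\<Sum>S\<in>insert j ` Pow {..<j}. f S)"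
    unfolding P by (rule sum.union_disjoint) (use d in auto)
  also have "(\<Sum>S\<in>insert j ` Pow {..<j}. f S) = (\<Sum>S\<in>Pow {..<j}. f (insert j S))"
    using sum.reindex[OF inj, of f] by simp
  finally show ?thesis by (simp add: sum.distrib)
qed

lemma es_comp_insert_top: "S \<in> Pow {..<j} \<Longrightarrow> es_comp m (insert j S) j X = es_comp m S j X"
  by (rule es_comp_cong) auto

lemma noise_upto_es_expansion:
  "noise_upto m j r X = (\<lambda>a b. \<Sum>S\<in>Pow {..<j}. complex_of_real (r ^ card S) * es_comp m S j X a b)"
proof (induction j)
  case 0 thus ?case by simp
next
  case (Suc j)
  show ?case
  proof (intro ext)
    fix a b
    have fin: "\<And>S. S \<in> Pow {..<j} \<Longrightarrow> finite S" using finite_subset by blast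
    have "noise_upto m (Suc j) r X a b = complex_of_real r * (\<Sum>S\<in>Pow {..<j}. complex_of_real (r ^ card S) * es_comp m S j X a b)
       + complex_of_real (1 - r) * (\<Sum>S\<in>Pow {..<j}. complex_of_real (r ^ card S) * reg_avg m j (es_comp m S j X) a b)"
      by (simp add: noise1_reg_avg Suc reg_avg_sum reg_avg_scale)
    also have "\<dots> = (\<Sum>S\<in>Pow {..<j}. complex_of_real (r ^ card S) * es_comp m S (Suc j) X a b + complex_of_real (r ^ card (insert j S)) * es_comp m (insert j S) (Suc j) X a b)"
      unfolding sum_distrib_left sum.distrib[symmetric]
    proof (intro sum.cong refl)
      fix S assume S: "S \<in> Pow {..<j}"
      hence jS: "j \<notin> S" by auto
      have c: "card (insert j S) = Suc (card S)" using fin[OF S] jS by simp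
      show "complex_of_real r * (complex_of_real (r ^ card S) * es_comp m S j X a b) +
         complex_of_real (1 - r) * (complex_of_real (r ^ card S) * reg_avg m j (es_comp m S j X) a b) =
         complex_of_real (r ^ card S) * es_comp m S (Suc j) X a b + complex_of_real (r ^ card (insert j S)) * es_comp m (insert j S) (Suc j) X a b"
        using es_comp_insert_top[OF S] jS c by (simp add: algebra_simps)
    qed
    also have "\<dots> = (\<Sum>S\<in>Pow {..<Suc j}. complex_of_real (r ^ card S) * es_comp m S (Suc j) X a b)"
      by (rule sum_Pow_Suc[symmetric])
    finally show "noise_upto m (Suc j) r X a b = (\<Sum>S\<in>Pow {..<Suc j}. complex_of_real (r ^ card S) * es_comp m S (Suc j) X a b)" .
  qed
qed

lemma noise_upto_1: "noise_upto m j 1 X = X"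
  by (induction j) (simp_all add: noise1_def)

lemma sum_es_comp: "(\<lambda>a b. \<Sum>S\<in>Pow {..<j}. es_comp m S j X a b) = X"
  using noise_upto_es_expansion[of m j 1 X] by (simp add: noise_upto_1)

lemma noise_1: "noise m n 1 P = P"
  by (simp add: noise_def noise_upto_1)

lemma es_comp_reg_avg:
  assumes "k < j"
  shows "reg_avg m k (es_comp m S j X) = (if k \<in> S then (\<lambda>a b. 0) else es_comp m S j X)"
  using assms
proof (induction j)
  case (Suc j)
  show ?case
  proof (cases "k = j")
    case True
    then show ?thesis by (simp add: reg_avg_diff reg_avg_idem)
  next
    case False
    then have "reg_avg m k (reg_avg m j (es_comp m S j X)) = reg_avg m j (reg_avg m k (es_comp m S j X))"
      by (rule reg_avg_commute)
    then show ?thesis using Suc False by (auto simp: reg_avg_diff reg_avg_zero)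
  qed
qed simp

lemma es_support_es_comp: "S \<subseteq> {..<n} \<Longrightarrow> es_support m n S (es_comp m S n X)"
  unfolding es_support_def traceless_at_def trivial_at_def by (auto simp: es_comp_reg_avg)

definition override_below :: "nat \<Rightarrow> (nat \<Rightarrow> nat) \<Rightarrow> (nat \<Rightarrow> nat) \<Rightarrow> (nat \<Rightarrow> nat)" where
  "override_below j c a = (\<lambda>k. if k < j then c k else a k)"

lemma es_comp_empty:
  "es_comp m {} j X a b = (if (\<forall>k<j. a k = b k) then (\<Sum>c\<in>idx m j. X (override_below j c a) (override_below j c b)) / of_nat m ^ j else 0)"
proof (induction j arbitrary: a b)
  case 0
  have "idx m 0 = {\<lambda>_. undefined}" unfolding idx_def by simp
  moreover have "\<And>c. override_below 0 c a = a" "\<And>c. override_below 0 c b = b" unfolding override_below_def by auto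
  ultimately show ?case by simp
next
  case (Suc j)
  show ?case
  proof (cases "a j = b j \<and> (\<forall>k<j. a k = b k)")
    case True
    hence all: "\<forall>k<Suc j. a k = b k" by (auto simp: less_Suc_eq)
    have "es_comp m {} (Suc j) X a b = (\<Sum>d<m. es_comp m {} j X (a(j:=d)) (b(j:=d))) / of_nat m"
      using True by (simp add: reg_avg_def)
    also have "\<dots> = (\<Sum>d<m. (\<Sum>c\<in>idx m j. X (override_below j c (a(j:=d))) (override_below j c (b(j:=d)))) / of_nat m ^ j) / of_nat m"
      using True by (simp add: Suc.IH)
    also have "\<dots> = (\<Sum>d<m. \<Sum>c\<in>idx m j. X (override_below j c (a(j:=d))) (override_below j c (b(j:=d)))) / of_nat m ^ Suc j"
      by (simp add: sum_divide_distrib[symmetric] divide_divide_eq_left mult.commute)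
    also have "(\<Sum>d<m. \<Sum>c\<in>idx m j. X (override_below j c (a(j:=d))) (override_below j c (b(j:=d)))) = (\<Sum>c\<in>idx m (Suc j). X (override_below (Suc j) c a) (override_below (Suc j) c b))"
    proof -
      have "\<And>g d x. override_below (Suc j) (g(j:=d)) x = override_below j g (x(j:=d))"
        unfolding override_below_def by (auto simp: fun_eq_iff less_Suc_eq)
      thus ?thesis by (simp add: sum_idx_Suc)
    qed
    finally show ?thesis using all by simp
  next
    case False
    hence "\<not> (\<forall>k<Suc j. a k = b k)" by (auto simp: less_Suc_eq)
    moreover have "es_comp m {} (Suc j) X a b = 0"
    proof (cases "a j = b j")
      case True
      hence nk: "\<not> (\<forall>k<j. a k = b k)" using False by simp
      have "es_comp m {} j X (a(j:=d)) (b(j:=d)) = 0" for d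
      proof -
        have "\<not> (\<forall>k<j. (a(j:=d)) k = (b(j:=d)) k)" using nk by auto
        thus ?thesis by (simp only: Suc.IH if_False)
      qed
      thus ?thesis by (simp add: reg_avg_def)
    qed (simp add: reg_avg_def)
    ultimately show ?thesis by (simp only: if_False)
  qed
qed

lemma es_comp_empty_full:
  assumes "a \<in> idx m n" "b \<in> idx m n"
  shows "es_comp m {} n X a b = (if a = b then trace_op m n X / of_nat m ^ n else 0)"
proof -
  have override_below: "override_below n c x = c" if "c \<in> idx m n" "x \<in> idx m n" for c x
    unfolding override_below_def using that by (auto simp: fun_eq_iff idx_undefined)
  show ?thesis
  proof (cases "a = b")
    case True
    have "(\<Sum>c\<in>idx m n. X (override_below n c a) (override_below n c b)) = trace_op m n X"
      unfolding trace_op_def using override_below assms by (intro sum.cong refl) auto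
    thus ?thesis using True by (simp only: es_comp_empty) simp
  next
    case False
    hence "\<not> (\<forall>k<n. a k = b k)" using idx_eqI[OF assms] by auto
    thus ?thesis using False by (simp only: es_comp_empty if_False)
  qed
qed

lemma frob_sq_es_comp_empty:
  assumes m: "m > 0"
  shows "frob_sq m n (es_comp m {} n P) = (cmod (trace_op m n P))\<^sup>2 / real m ^ n"
proof -
  have "frob_sq m n (es_comp m {} n P) = (\<Sum>a\<in>idx m n. \<Sum>b\<in>idx m n. if a = b then (cmod (trace_op m n P / of_nat m ^ n))\<^sup>2 else 0)"
    unfolding frob_sq_def by (intro sum.cong refl) (simp add: es_comp_empty_full)
  also have "\<dots> = real (card (idx m n)) * (cmod (trace_op m n P / of_nat m ^ n))\<^sup>2"
    by simp
  also have "\<dots> = (cmod (trace_op m n P))\<^sup>2 / real m ^ n"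
    unfolding card_idx using m by (simp add: norm_divide norm_power power_divide power2_eq_square field_simps)
  finally show ?thesis .
qed

lemma frob_sq_eq_sum_es_comp:
  shows "frob_sq m n P = (\<Sum>S\<in>Pow {..<n}. frob_sq m n (es_comp m S n P))"
proof -
  let ?I = "Pow {..<n}"
  have fI: "finite ?I" by simp
  have Pe: "P = (\<lambda>a b. \<Sum>S\<in>?I. 1 * es_comp m S n P a b)" using sum_es_comp[of m n P] by simp
  have Pc: "(\<lambda>a b. cnj (P a b)) = (\<lambda>a b. \<Sum>S\<in>?I. 1 * cnj (es_comp m S n P a b))"
    by (subst (1) Pe) (simp add: cnj_sum)
  have nfe: "complex_of_real (frob_sq m n X) = pairing m n (\<lambda>a b. cnj (X a b)) X" for X
    unfolding frob_sq_def pairing_def by (simp only: of_real_sum) (intro sum.cong refl, metis complex_norm_square mult.commute)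
  have "complex_of_real (frob_sq m n P) = pairing m n (\<lambda>a b. \<Sum>S\<in>?I. 1 * cnj (es_comp m S n P a b)) (\<lambda>a b. \<Sum>S\<in>?I. 1 * es_comp m S n P a b)"
    unfolding nfe by (subst Pc, subst (2) Pe) (rule refl)
  also have "\<dots> = (\<Sum>T\<in>?I. \<Sum>S\<in>?I. pairing m n (\<lambda>a b. cnj (es_comp m T n P a b)) (es_comp m S n P))"
    unfolding pairing_sum_left pairing_sum_right by simp
  also have "\<dots> = (\<Sum>T\<in>?I. pairing m n (\<lambda>a b. cnj (es_comp m T n P a b)) (es_comp m T n P))"
  proof (rule sum_sum_offdiag_zero[OF _ fI])
    fix S T assume "S \<in> ?I" "T \<in> ?I" "S \<noteq> T"
    thus "pairing m n (\<lambda>a b. cnj (es_comp m S n P a b)) (es_comp m T n P) = 0"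
      by (intro pairing_es_support_orthogonal[of S n T] es_support_cnj es_support_es_comp) auto
  qed
  also have "\<dots> = complex_of_real (\<Sum>S\<in>?I. frob_sq m n (es_comp m S n P))"
    unfolding nfe[symmetric] of_real_sum by (rule refl)
  finally show ?thesis by (simp only: of_real_eq_iff)
qed

section \<open>Variance\<close>

lemma inner_op_self: "inner_op m n P P = complex_of_real (frob_sq m n P) / of_nat (m ^ n)"
proof -
  have "(\<Sum>a\<in>idx m n. \<Sum>b\<in>idx m n. cnj (P b a) * P b a) = (\<Sum>a\<in>idx m n. \<Sum>b\<in>idx m n. complex_of_real ((cmod (P b a))\<^sup>2))"
    by (intro sum.cong refl) (metis complex_norm_square mult.commute)
  also have "\<dots> = complex_of_real (\<Sum>b\<in>idx m n. \<Sum>a\<in>idx m n. (cmod (P b a))\<^sup>2)"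
    by (simp only: of_real_sum) (rule sum.swap)
  finally show ?thesis unfolding inner_op_def frob_sq_def by simp
qed

lemma inner_op_id_right: "inner_op m n P id_op = cnj (trace_op m n P) / of_nat (m ^ n)"
proof -
  have "(\<Sum>a\<in>idx m n. \<Sum>b\<in>idx m n. cnj (P b a) * id_op b a) = (\<Sum>a\<in>idx m n. cnj (P a a))"
  proof (intro sum.cong refl)
    fix a assume "a \<in> idx m n"
    have "(\<Sum>b\<in>idx m n. cnj (P b a) * id_op b a) = (\<Sum>b\<in>idx m n. if b = a then cnj (P b a) else 0)"
      unfolding id_op_def by (intro sum.cong refl) simp
    thus "(\<Sum>b\<in>idx m n. cnj (P b a) * id_op b a) = cnj (P a a)" using \<open>a \<in> idx m n\<close> by simp
  qed
  thus ?thesis unfolding inner_op_def trace_op_def by (simp add: cnj_sum)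
qed

lemma inner_op_id_left: "inner_op m n id_op P = trace_op m n P / of_nat (m ^ n)"
proof -
  have "(\<Sum>a\<in>idx m n. \<Sum>b\<in>idx m n. cnj (id_op b a) * P b a) = (\<Sum>a\<in>idx m n. P a a)"
  proof (intro sum.cong refl)
    fix a assume "a \<in> idx m n"
    have "(\<Sum>b\<in>idx m n. cnj (id_op b a) * P b a) = (\<Sum>b\<in>idx m n. if b = a then P b a else 0)"
      unfolding id_op_def by (intro sum.cong refl) simp
    thus "(\<Sum>b\<in>idx m n. cnj (id_op b a) * P b a) = P a a" using \<open>a \<in> idx m n\<close> by simp
  qed
  thus ?thesis unfolding inner_op_def trace_op_def by simp
qed

lemma var_op_eq: "var_op m n P = frob_sq m n P / real m ^ n - (cmod (trace_op m n P))\<^sup>2 / (real m ^ n)\<^sup>2"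
proof -
  have M: "(of_nat (m ^ n) :: complex) = complex_of_real (real m ^ n)" by simp
  have "inner_op m n P id_op * inner_op m n id_op P = (cnj (trace_op m n P) * trace_op m n P) / (of_nat (m ^ n))\<^sup>2"
    unfolding inner_op_id_right inner_op_id_left by (simp add: power2_eq_square)
  also have "\<dots> = complex_of_real ((cmod (trace_op m n P))\<^sup>2 / (real m ^ n)\<^sup>2)"
  proof -
    have "cnj (trace_op m n P) * trace_op m n P = complex_of_real ((cmod (trace_op m n P))\<^sup>2)"
      by (metis complex_norm_square mult.commute)
    thus ?thesis unfolding M by (simp only: of_real_divide of_real_power)
  qed
  finally have e: "inner_op m n P id_op * inner_op m n id_op P = complex_of_real ((cmod (trace_op m n P))\<^sup>2 / (real m ^ n)\<^sup>2)" .
  have f: "inner_op m n P P = complex_of_real (frob_sq m n P / real m ^ n)" unfolding inner_op_self M by simp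
  show ?thesis unfolding var_op_def e f by simp
qed

lemma var_op_eq_sum_es_comp:
  assumes "0 < m"
  shows "var_op m n P = (\<Sum>S\<in>Pow {..<n} - {{}}. frob_sq m n (es_comp m S n P)) / real m ^ n"
proof -
  have "frob_sq m n P = frob_sq m n (es_comp m {} n P) + (\<Sum>S\<in>Pow {..<n} - {{}}. frob_sq m n (es_comp m S n P))"
    unfolding frob_sq_eq_sum_es_comp[of m n P] by (rule sum.remove) auto
  then show ?thesis
    using assms by (simp add: var_op_eq frob_sq_es_comp_empty field_simps power2_eq_square)
qed

section \<open>Maximal correlation\<close>

definition maxmixed_A :: "nat \<Rightarrow> op2 \<Rightarrow> bool" where
  "maxmixed_A m \<psi> \<longleftrightarrow> (\<forall>a<m. \<forall>a'<m. ptrace_B m \<psi> a a' = maxmixed1 m a a')"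

definition maxmixed_B :: "nat \<Rightarrow> op2 \<Rightarrow> bool" where
  "maxmixed_B m \<psi> \<longleftrightarrow> (\<forall>a<m. \<forall>a'<m. ptrace_A m \<psi> a a' = maxmixed1 m a a')"

lemma maxmixed_A_sum:
  "maxmixed_A m \<psi> \<Longrightarrow> c < m \<Longrightarrow> c' < m \<Longrightarrow>
    (\<Sum>d<m. \<psi> (c', d) (c, d)) = (if c' = c then 1 / of_nat m else 0)"
  unfolding maxmixed_A_def ptrace_B_def maxmixed1_def by auto

lemma maxmixed_B_sum:
  "maxmixed_B m \<psi> \<Longrightarrow> c < m \<Longrightarrow> c' < m \<Longrightarrow>
    (\<Sum>d<m. \<psi> (d, c') (d, c)) = (if c' = c then 1 / of_nat m else 0)"
  unfolding maxmixed_B_def ptrace_A_def maxmixed1_def by auto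

lemma noisy_max_ent_facts:
  assumes "noisy_max_ent m \<psi>"
  shows "maxmixed_B m \<psi>" "maxmixed_A m \<psi>" "m > 0" "max_corr m \<psi> < 1"
  using assms unfolding noisy_max_ent_def density2_def maxmixed_A_def maxmixed_B_def
  by (auto intro: gr0I)

definition frob1_sq :: "nat \<Rightarrow> op1 \<Rightarrow> real" where
  "frob1_sq m Y = (\<Sum>a<m. \<Sum>b<m. (cmod (Y a b))\<^sup>2)"

text \<open>\<open>corr1 m \<psi> P Q = Tr ((P\<^sup>\<dagger> \<otimes> Q) \<psi>)\<close>, the quantity maximized in \<open>max_corr\<close>.\<close>
definition corr1 :: "nat \<Rightarrow> op2 \<Rightarrow> op1 \<Rightarrow> op1 \<Rightarrow> complex" where
  "corr1 m \<psi> P Q = (\<Sum>a<m. \<Sum>b<m. \<Sum>a'<m. \<Sum>b'<m. cnj (P a' a) * Q b b' * \<psi> (a', b') (a, b))"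

definition max_corr_set :: "nat \<Rightarrow> op2 \<Rightarrow> real set" where
  "max_corr_set m \<psi> = {cmod (corr1 m \<psi> P Q) | P Q.
       (\<Sum>a<m. P a a) = 0 \<and> (\<Sum>a<m. Q a a) = 0 \<and> frob1_sq m P / real m = 1 \<and> frob1_sq m Q / real m = 1}"

lemma max_corr_eq_Sup: "max_corr m \<psi> = Sup (insert 0 (max_corr_set m \<psi>))"
  unfolding max_corr_def max_corr_set_def corr1_def frob1_sq_def by simp

lemma frob1_sq_nonneg: "0 \<le> frob1_sq m Y"
  unfolding frob1_sq_def by (intro sum_nonneg) auto

lemma norm_entry_le_frob1_sq:
  assumes "x < m" "y < m"
  shows "(cmod (Y x y))\<^sup>2 \<le> frob1_sq m Y"
proof -
  have "(cmod (Y x y))\<^sup>2 \<le> (\<Sum>b<m. (cmod (Y x b))\<^sup>2)"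
    by (rule member_le_sum[where f="\<lambda>b. (cmod (Y x b))\<^sup>2"]) (use assms in auto)
  also have "\<dots> \<le> frob1_sq m Y"
    unfolding frob1_sq_def by (rule member_le_sum[where f="\<lambda>a. \<Sum>b<m. (cmod (Y a b))\<^sup>2"]) (use assms in \<open>auto intro: sum_nonneg\<close>)
  finally show ?thesis .
qed

lemma frob1_sq_eq_0D: "frob1_sq m Y = 0 \<Longrightarrow> x < m \<Longrightarrow> y < m \<Longrightarrow> Y x y = 0"
  using norm_entry_le_frob1_sq[of x m y Y] by simp

lemma bdd_above_max_corr_set: "bdd_above (insert 0 (max_corr_set m \<psi>))"
proof -
  define K where "K = real m * (\<Sum>a<m. \<Sum>b<m. \<Sum>a'<m. \<Sum>b'<m. cmod (\<psi> (a', b') (a, b)))"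
  have "cmod (corr1 m \<psi> P Q) \<le> K" if "frob1_sq m P = real m" "frob1_sq m Q = real m" for P Q
  proof -
    have entry: "cmod (Y x y) \<le> sqrt (real m)" if "frob1_sq m Y = real m" "x < m" "y < m" for Y x y
      using norm_entry_le_frob1_sq[of x m y Y] that by (simp add: real_le_rsqrt)
    have "cmod (corr1 m \<psi> P Q) \<le> (\<Sum>a<m. \<Sum>b<m. \<Sum>a'<m. \<Sum>b'<m. cmod (cnj (P a' a) * Q b b' * \<psi> (a', b') (a, b)))"
      unfolding corr1_def by (intro order_trans[OF norm_sum] sum_mono) auto
    also have "\<dots> \<le> (\<Sum>a<m. \<Sum>b<m. \<Sum>a'<m. \<Sum>b'<m. real m * cmod (\<psi> (a', b') (a, b)))"
    proof (intro sum_mono)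
      fix a b a' b' assume "a \<in> {..<m}" "b \<in> {..<m}" "a' \<in> {..<m}" "b' \<in> {..<m}"
      then have "cmod (P a' a) * cmod (Q b b') \<le> sqrt (real m) * sqrt (real m)"
        using that by (intro mult_mono entry) auto
      then show "cmod (cnj (P a' a) * Q b b' * \<psi> (a', b') (a, b)) \<le> real m * cmod (\<psi> (a', b') (a, b))"
        by (simp add: norm_mult mult_right_mono)
    qed
    also have "\<dots> = K" unfolding K_def by (simp add: sum_distrib_left)
    finally show ?thesis .
  qed
  moreover have "0 \<le> K" unfolding K_def by (intro mult_nonneg_nonneg sum_nonneg) auto
  ultimately show ?thesis
    unfolding bdd_above_def max_corr_set_def by (intro exI[of _ K]) (auto simp: divide_eq_1_iff)
qed

lemma max_corr_nonneg: "0 \<le> max_corr m \<psi>"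
  unfolding max_corr_eq_Sup by (rule cSup_upper[OF _ bdd_above_max_corr_set]) simp

lemma max_corr_ge: "x \<in> max_corr_set m \<psi> \<Longrightarrow> x \<le> max_corr m \<psi>"
  unfolding max_corr_eq_Sup by (rule cSup_upper[OF _ bdd_above_max_corr_set]) simp

lemma corr1_scale: "corr1 m \<psi> (\<lambda>x y. of_real s * P x y) (\<lambda>x y. of_real t * Q x y) = of_real (s * t) * corr1 m \<psi> P Q"
  unfolding corr1_def by (simp add: sum_distrib_left mult_ac)

lemma frob1_sq_scale: "frob1_sq m (\<lambda>x y. of_real s * Y x y) = s\<^sup>2 * frob1_sq m Y"
  unfolding frob1_sq_def by (simp add: norm_mult power_mult_distrib sum_distrib_left)

lemma norm_corr1_le:
  assumes P: "(\<Sum>a<m. P a a) = 0" and Q: "(\<Sum>a<m. Q a a) = 0"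
  shows "cmod (corr1 m \<psi> P Q) \<le> max_corr m \<psi> * sqrt (frob1_sq m P / m) * sqrt (frob1_sq m Q / m)"
proof (cases "frob1_sq m P = 0 \<or> frob1_sq m Q = 0")
  case True
  then have "P a' a = 0 \<or> Q b b' = 0" if "a < m" "b < m" "a' < m" "b' < m" for a b a' b'
    using that frob1_sq_eq_0D by blast
  then have "corr1 m \<psi> P Q = 0" unfolding corr1_def by (auto intro!: sum.neutral)
  then show ?thesis using max_corr_nonneg[of m \<psi>] frob1_sq_nonneg[of m P] frob1_sq_nonneg[of m Q] by simp
next
  case False
  then have pos: "0 < frob1_sq m P" "0 < frob1_sq m Q"
    using frob1_sq_nonneg[of m P] frob1_sq_nonneg[of m Q] by linarith+
  have m: "0 < m" using pos(1) by (cases m) (simp_all add: frob1_sq_def)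
  define s where "s = sqrt (m / frob1_sq m P)"
  define t where "t = sqrt (m / frob1_sq m Q)"
  have s: "s\<^sup>2 * frob1_sq m P / m = 1" "s * sqrt (frob1_sq m P / m) = 1"
    using pos m by (simp_all add: s_def real_sqrt_mult[symmetric])
  have t: "t\<^sup>2 * frob1_sq m Q / m = 1" "t * sqrt (frob1_sq m Q / m) = 1"
    using pos m by (simp_all add: t_def real_sqrt_mult[symmetric])
  have "(\<Sum>a<m. of_real s * P a a) = 0" "(\<Sum>a<m. of_real t * Q a a) = 0"
    using P Q by (simp_all flip: sum_distrib_left)
  moreover have "frob1_sq m (\<lambda>x y. of_real s * P x y) / m = 1" "frob1_sq m (\<lambda>x y. of_real t * Q x y) / m = 1"
    by (simp_all only: frob1_sq_scale s(1) t(1))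
  ultimately have "cmod (corr1 m \<psi> (\<lambda>x y. of_real s * P x y) (\<lambda>x y. of_real t * Q x y)) \<in> max_corr_set m \<psi>"
    unfolding max_corr_set_def by blast
  then have st: "s * t * cmod (corr1 m \<psi> P Q) \<le> max_corr m \<psi>"
    using max_corr_ge pos by (simp add: corr1_scale norm_mult s_def t_def)
  have "cmod (corr1 m \<psi> P Q) = (s * sqrt (frob1_sq m P / m)) * (t * sqrt (frob1_sq m Q / m)) * cmod (corr1 m \<psi> P Q)"
    using s(2) t(2) by simp
  also have "\<dots> = (s * t * cmod (corr1 m \<psi> P Q)) * (sqrt (frob1_sq m P / m) * sqrt (frob1_sq m Q / m))"
    by (simp only: mult_ac)
  also have "\<dots> \<le> max_corr m \<psi> * (sqrt (frob1_sq m P / m) * sqrt (frob1_sq m Q / m))"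
    using pos by (intro mult_right_mono st) simp
  finally show ?thesis by (simp only: mult_ac)
qed

definition transfer1 :: "nat \<Rightarrow> op2 \<Rightarrow> op1 \<Rightarrow> op1" where
  "transfer1 m \<psi> Y = (\<lambda>d d'. \<Sum>c<m. \<Sum>c'<m. Y c c' * \<psi> (c', d') (c, d))"

lemma trace_transfer1_eq_0:
  assumes "maxmixed_A m \<psi>" "(\<Sum>c<m. Y c c) = 0"
  shows "(\<Sum>b<m. transfer1 m \<psi> Y b b) = 0"
proof -
  have "(\<Sum>b<m. transfer1 m \<psi> Y b b) = (\<Sum>c<m. \<Sum>c'<m. Y c c' * (\<Sum>b<m. \<psi> (c', b) (c, b)))"
    unfolding transfer1_def
    using sum_swap3[where A="{..<m}" and B="{..<m}" and C="{..<m}" and f="\<lambda>b c c'. Y c c' * \<psi> (c', b) (c, b)"]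
    by (simp add: sum_distrib_left)
  also have "\<dots> = (\<Sum>c<m. \<Sum>c'<m. if c' = c then Y c c' / of_nat m else 0)"
    using maxmixed_A_sum[OF assms(1)] by (intro sum.cong refl) auto
  also have "\<dots> = (\<Sum>c<m. Y c c) / of_nat m" by (simp add: sum.delta' sum_divide_distrib)
  finally show ?thesis using assms(2) by simp
qed

lemma corr1_adjoint_transfer1:
  "corr1 m \<psi> (\<lambda>x y. cnj (Y y x)) (\<lambda>x y. cnj (transfer1 m \<psi> Y x y)) = of_real (frob1_sq m (transfer1 m \<psi> Y))"
proof -
  define T where "T = transfer1 m \<psi> Y"
  have T: "T b b' = (\<Sum>a<m. \<Sum>a'<m. Y a a' * \<psi> (a', b') (a, b))" for b b'
    by (simp add: T_def transfer1_def)
  have "corr1 m \<psi> (\<lambda>x y. cnj (Y y x)) (\<lambda>x y. cnj (T x y))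
      = (\<Sum>b<m. \<Sum>b'<m. \<Sum>a<m. \<Sum>a'<m. cnj (T b b') * (Y a a' * \<psi> (a', b') (a, b)))"
    unfolding corr1_def by (subst sum_swap4) (simp add: mult_ac)
  also have "\<dots> = (\<Sum>b<m. \<Sum>b'<m. cnj (T b b') * T b b')"
    by (simp add: T sum_distrib_left)
  also have "\<dots> = of_real (frob1_sq m T)"
    unfolding frob1_sq_def of_real_sum by (simp only: complex_norm_square mult.commute)
  finally show ?thesis by (simp add: T_def)
qed

text \<open>Test the maximal correlation against \<open>Y\<^sup>\<dagger>\<close> and the entrywise conjugate of its image.\<close>
lemma frob1_sq_transfer1_le:
  assumes "maxmixed_A m \<psi>" and tr: "(\<Sum>c<m. Y c c) = 0"
  shows "frob1_sq m (transfer1 m \<psi> Y) \<le> (max_corr m \<psi> / real m)\<^sup>2 * frob1_sq m Y"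
proof -
  define A where "A = frob1_sq m Y"
  define B where "B = frob1_sq m (transfer1 m \<psi> Y)"
  have A0: "0 \<le> A" and B0: "0 \<le> B" by (simp_all add: A_def B_def frob1_sq_nonneg)
  have "frob1_sq m (\<lambda>x y. cnj (Y y x)) = A"
    unfolding A_def frob1_sq_def by (subst sum.swap) simp
  moreover have "frob1_sq m (\<lambda>x y. cnj (transfer1 m \<psi> Y x y)) = B"
    by (simp add: B_def frob1_sq_def)
  moreover have "(\<Sum>a<m. cnj (Y a a)) = 0" "(\<Sum>a<m. cnj (transfer1 m \<psi> Y a a)) = 0"
    using tr trace_transfer1_eq_0[where Y=Y, OF assms(1) tr] by (simp_all flip: cnj_sum)
  ultimately have "sqrt B * sqrt B \<le> max_corr m \<psi> * sqrt (A / m) * sqrt (B / m)"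
    using norm_corr1_le[where P="\<lambda>x y. cnj (Y y x)" and Q="\<lambda>x y. cnj (transfer1 m \<psi> Y x y)" and \<psi>=\<psi> and m=m]
    by (simp add: corr1_adjoint_transfer1 B_def frob1_sq_nonneg)
  also have "\<dots> = (max_corr m \<psi> * sqrt A / m) * sqrt B"
    by (simp add: real_sqrt_divide)
  finally have *: "sqrt B * sqrt B \<le> (max_corr m \<psi> * sqrt A / m) * sqrt B" .
  have "sqrt B \<le> max_corr m \<psi> * sqrt A / m"
  proof (cases "sqrt B = 0")
    case True
    then show ?thesis using max_corr_nonneg[of m \<psi>] A0 by simp
  next
    case False
    then have "0 < sqrt B" using B0 by simp
    with * show ?thesis by (metis mult_le_cancel_right_pos)
  qed
  then have "(sqrt B)\<^sup>2 \<le> (max_corr m \<psi> * sqrt A / m)\<^sup>2"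
    by (rule power_mono) (simp add: B0)
  then have "B \<le> (max_corr m \<psi> / real m)\<^sup>2 * A"
    using A0 B0 by (simp add: power_divide power_mult_distrib)
  then show ?thesis by (simp add: A_def B_def)
qed



section \<open>Contraction against the state\<close>

text \<open>Contracts the A-side register \<open>k\<close> of \<open>X\<close> against \<open>\<psi>\<close>; the result lives on the B-side.\<close>
definition reg_transfer :: "nat \<Rightarrow> op2 \<Rightarrow> nat \<Rightarrow> opn \<Rightarrow> opn" where
  "reg_transfer m \<psi> k X = (\<lambda>b b'. \<Sum>c<m. \<Sum>c'<m. X (b(k:=c)) (b'(k:=c')) * \<psi> (c', b' k) (c, b k))"

lemma reg_avg_reg_transfer_commute:
  assumes "j \<noteq> k"
  shows "reg_avg m j (reg_transfer m \<psi> k X) = reg_transfer m \<psi> k (reg_avg m j X)"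
proof (intro ext)
  fix a b :: "nat \<Rightarrow> nat"
  have upd: "\<And>c d. a(j:=c, k:=d) = a(k:=d, j:=c)" "\<And>c d. b(j:=c, k:=d) = b(k:=d, j:=c)"
    by (rule fun_upd_twist[OF assms])+
  have s1: "reg_avg m j (reg_transfer m \<psi> k X) a b = (if a j = b j then (\<Sum>c<m. \<Sum>d<m. \<Sum>d'<m. X (a(j:=c, k:=d)) (b(j:=c, k:=d')) * \<psi> (d', b k) (d, a k)) / of_nat m else 0)"
    unfolding reg_avg_def reg_transfer_def using assms by simp
  have s2: "reg_transfer m \<psi> k (reg_avg m j X) a b = (if a j = b j then (\<Sum>d<m. \<Sum>d'<m. \<Sum>c<m. X (a(k:=d, j:=c)) (b(k:=d', j:=c)) * \<psi> (d', b k) (d, a k)) / of_nat m else 0)"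
    unfolding reg_avg_def reg_transfer_def using assms by (auto simp add: sum_divide_distrib sum_distrib_right)
  show "reg_avg m j (reg_transfer m \<psi> k X) a b = reg_transfer m \<psi> k (reg_avg m j X) a b"
    unfolding s1 s2 upd using sum_swap3[where A="{..<m}" and B="{..<m}" and C="{..<m}" and f="\<lambda>c d d'. X (a(k:=d, j:=c)) (b(k:=d', j:=c)) * \<psi> (d', b k) (d, a k)"] by simp
qed

lemma reg_avg_reg_transfer_same:
  assumes "maxmixed_A m \<psi>"
  shows "reg_avg m k (reg_transfer m \<psi> k X) = (\<lambda>a b. reg_avg m k X a b / of_nat m)"
proof (intro ext)
  fix a b :: "nat \<Rightarrow> nat"
  show "reg_avg m k (reg_transfer m \<psi> k X) a b = reg_avg m k X a b / of_nat m"
  proof (cases "a k = b k")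
    case True
    have "reg_avg m k (reg_transfer m \<psi> k X) a b = (\<Sum>d<m. \<Sum>c<m. \<Sum>c'<m. X (a(k:=c)) (b(k:=c')) * \<psi> (c', d) (c, d)) / of_nat m"
      using True by (simp add: reg_avg_def reg_transfer_def)
    also have "\<dots> = (\<Sum>c<m. \<Sum>c'<m. X (a(k:=c)) (b(k:=c')) * (\<Sum>d<m. \<psi> (c', d) (c, d))) / of_nat m"
      using sum_swap3[where A="{..<m}" and B="{..<m}" and C="{..<m}" and f="\<lambda>d c c'. X (a(k:=c)) (b(k:=c')) * \<psi> (c', d) (c, d)"] by (simp add: sum_distrib_left)
    also have "\<dots> = (\<Sum>c<m. \<Sum>c'<m. X (a(k:=c)) (b(k:=c')) * (if c' = c then 1 / of_nat m else 0)) / of_nat m"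
      using maxmixed_A_sum[OF assms] by simp
    also have "\<dots> = (\<Sum>c<m. X (a(k:=c)) (b(k:=c)) / of_nat m) / of_nat m"
    proof -
      have "(\<Sum>c'<m. X (a(k:=c)) (b(k:=c')) * (if c' = c then 1 / of_nat m else 0)) = X (a(k:=c)) (b(k:=c)) / of_nat m"
        if "c < m" for c
      proof -
        have "(\<Sum>c'<m. X (a(k:=c)) (b(k:=c')) * (if c' = c then 1 / of_nat m else 0)) = (\<Sum>c'<m. if c' = c then X (a(k:=c)) (b(k:=c')) / of_nat m else 0)"
          by (rule sum.cong) auto
        also have "\<dots> = X (a(k:=c)) (b(k:=c)) / of_nat m" using that by (simp add: sum.delta')
        finally show ?thesis .
      qed
      thus ?thesis by simp
    qed
    also have "\<dots> = reg_avg m k X a b / of_nat m" using True by (simp add: reg_avg_def sum_divide_distrib)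
    finally show ?thesis .
  qed (simp add: reg_avg_def)
qed

lemma reg_transfer_trivial_at:
  assumes "maxmixed_B m \<psi>" "trivial_at m n k X" "k < n" "b \<in> idx m n" "b' \<in> idx m n"
  shows "reg_transfer m \<psi> k X b b' = X b b' / of_nat m"
proof -
  define W where "W = (\<Sum>d<m. X (b(k:=d)) (b'(k:=d))) / of_nat m"
  have X: "X (b(k:=c)) (b'(k:=c')) = (if c = c' then W else 0)" if "c < m" "c' < m" for c c'
  proof -
    have "X (b(k:=c)) (b'(k:=c')) = reg_avg m k X (b(k:=c)) (b'(k:=c'))"
      using assms(2) idx_upd[OF assms(4,3) that(1)] idx_upd[OF assms(5,3) that(2)] unfolding trivial_at_def by metis
    thus ?thesis by (simp add: reg_avg_def W_def)
  qed
  have bk: "b k < m" "b' k < m" using idx_less assms by auto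
  have "reg_transfer m \<psi> k X b b' = (\<Sum>c<m. \<Sum>c'<m. (if c = c' then W else 0) * \<psi> (c', b' k) (c, b k))"
    unfolding reg_transfer_def by (rule sum.cong[OF refl], rule sum.cong[OF refl]) (simp add: X)
  also have "\<dots> = (\<Sum>c<m. W * \<psi> (c, b' k) (c, b k))"
  proof (rule sum.cong[OF refl])
    fix c assume "c \<in> {..<m}"
    have "(\<Sum>c'<m. (if c = c' then W else 0) * \<psi> (c', b' k) (c, b k)) = (\<Sum>c'<m. (if c = c' then W * \<psi> (c', b' k) (c, b k) else 0))"
      by (rule sum.cong) auto
    also have "\<dots> = W * \<psi> (c, b' k) (c, b k)" using \<open>c \<in> {..<m}\<close> by (simp add: sum.delta)
    finally show "(\<Sum>c'<m. (if c = c' then W else 0) * \<psi> (c', b' k) (c, b k)) = W * \<psi> (c, b' k) (c, b k)" .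
  qed
  also have "\<dots> = W * (\<Sum>c<m. \<psi> (c, b' k) (c, b k))" by (simp add: sum_distrib_left)
  also have "\<dots> = W * (if b' k = b k then 1 / of_nat m else 0)"
    using maxmixed_B_sum[OF assms(1) bk] by simp
  also have "\<dots> = X b b' / of_nat m"
  proof -
    have "X b b' = reg_avg m k X b b'" using assms(2,4,5) unfolding trivial_at_def by metis
    thus ?thesis by (auto simp: reg_avg_def W_def)
  qed
  finally show ?thesis .
qed

lemma eq_on_idx_reg_transfer: "eq_on_idx m n X Y \<Longrightarrow> k < n \<Longrightarrow> eq_on_idx m n (reg_transfer m \<psi> k X) (reg_transfer m \<psi> k Y)"
  unfolding eq_on_idx_def reg_transfer_def by (auto intro!: sum.cong simp: idx_upd)

lemma reg_transfer_eq_0: "eq_on_idx m n X (\<lambda>a b. 0) \<Longrightarrow> k < n \<Longrightarrow> a \<in> idx m n \<Longrightarrow> b \<in> idx m n \<Longrightarrow> reg_transfer m \<psi> k X a b = 0"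
  using eq_on_idx_reg_transfer[of m n X "\<lambda>a b. 0" k \<psi>] unfolding eq_on_idx_def by (simp add: reg_transfer_def)

lemma traceless_at_reg_transfer_other:
  assumes "j \<noteq> k" "k < n" "traceless_at m n j X"
  shows "traceless_at m n j (reg_transfer m \<psi> k X)"
  unfolding traceless_at_def reg_avg_reg_transfer_commute[OF assms(1)]
proof (intro ballI)
  fix a b assume "a \<in> idx m n" "b \<in> idx m n"
  moreover have "eq_on_idx m n (reg_avg m j X) (\<lambda>a b. 0)" using assms(3) by (simp add: traceless_at_def eq_on_idx_def)
  ultimately show "reg_transfer m \<psi> k (reg_avg m j X) a b = 0" using reg_transfer_eq_0 assms(2) by blast
qed

lemma trivial_at_reg_transfer_other:
  assumes "j \<noteq> k" "k < n" "trivial_at m n j X"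
  shows "trivial_at m n j (reg_transfer m \<psi> k X)"
  unfolding trivial_at_def reg_avg_reg_transfer_commute[OF assms(1)]
proof (intro ballI)
  fix a b assume "a \<in> idx m n" "b \<in> idx m n"
  moreover have "eq_on_idx m n (reg_avg m j X) X" using assms(3) by (simp add: trivial_at_def eq_on_idx_def)
  ultimately show "reg_transfer m \<psi> k (reg_avg m j X) a b = reg_transfer m \<psi> k X a b" using eq_on_idx_reg_transfer[OF _ assms(2)] unfolding eq_on_idx_def by blast
qed

lemma traceless_at_reg_transfer_same:
  assumes "maxmixed_A m \<psi>" "traceless_at m n k X"
  shows "traceless_at m n k (reg_transfer m \<psi> k X)"
  using assms(2) unfolding traceless_at_def reg_avg_reg_transfer_same[OF assms(1)] by simp

lemma trivial_at_reg_transfer_same: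
  assumes "maxmixed_B m \<psi>" "maxmixed_A m \<psi>" "k < n" "trivial_at m n k X"
  shows "trivial_at m n k (reg_transfer m \<psi> k X)"
  unfolding trivial_at_def reg_avg_reg_transfer_same[OF assms(2)]
proof (intro ballI)
  fix a b assume ab: "a \<in> idx m n" "b \<in> idx m n"
  have "reg_avg m k X a b = X a b" using assms(4) ab unfolding trivial_at_def by blast
  thus "reg_avg m k X a b / of_nat m = reg_transfer m \<psi> k X a b" using reg_transfer_trivial_at[OF assms(1,4,3) ab] by simp
qed

lemma frob_sq_reg_transfer_le:
  assumes pB: "maxmixed_A m \<psi>" and k: "k < n" and pu: "traceless_at m n k X"
  shows "frob_sq m n (reg_transfer m \<psi> k X) \<le> (max_corr m \<psi> / real m)\<^sup>2 * frob_sq m n X"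
proof -
  define I0 where "I0 = {a\<in>idx m n. a k = 0}"
  define Y where "Y = (\<lambda>b b'. (\<lambda>c c'. X (b(k:=c)) (b'(k:=c'))) :: op1)"
  have TT: "reg_transfer m \<psi> k X (b(k:=d)) (b'(k:=d')) = transfer1 m \<psi> (Y b b') d d'" for b b' d d'
    unfolding reg_transfer_def transfer1_def Y_def by simp
  have tr: "(\<Sum>c<m. Y b b' c c) = 0" if "b \<in> I0" "b' \<in> I0" for b b'
  proof (cases "m = 0")
    case False
    have "reg_avg m k X b b' = 0" using pu that unfolding traceless_at_def I0_def by auto
    hence "(\<Sum>c<m. X (b(k:=c)) (b'(k:=c))) / of_nat m = 0" using that unfolding reg_avg_def I0_def by simp
    thus ?thesis using False unfolding Y_def by simp
  qed simp
  have "frob_sq m n (reg_transfer m \<psi> k X) = (\<Sum>b\<in>I0. \<Sum>b'\<in>I0. frob1_sq m (transfer1 m \<psi> (Y b b')))"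
    unfolding frob_sq_def frob1_sq_def I0_def TT[symmetric] by (rule sum_idx2_split[OF k])
  also have "\<dots> \<le> (\<Sum>b\<in>I0. \<Sum>b'\<in>I0. (max_corr m \<psi> / real m)\<^sup>2 * frob1_sq m (Y b b'))"
    by (intro sum_mono frob1_sq_transfer1_le[OF pB] tr)
  also have "\<dots> = (max_corr m \<psi> / real m)\<^sup>2 * frob_sq m n X"
    unfolding frob_sq_def frob1_sq_def sum_idx2_split[OF k] I0_def Y_def by (simp add: sum_distrib_left)
  finally show ?thesis .
qed

definition transfer_upto :: "nat \<Rightarrow> nat \<Rightarrow> op2 \<Rightarrow> nat \<Rightarrow> opn \<Rightarrow> opn" where
  "transfer_upto m n \<psi> j X = (\<lambda>b b'. \<Sum>a\<in>idx m n. \<Sum>a'\<in>idx m n.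
     if (\<forall>k. j \<le> k \<and> k < n \<longrightarrow> a k = b k \<and> a' k = b' k)
     then X a a' * (\<Prod>k<j. \<psi> (a' k, b' k) (a k, b k)) else 0)"

lemma transfer_upto_0: "eq_on_idx m n (transfer_upto m n \<psi> 0 X) X"
  unfolding eq_on_idx_def
proof (intro ballI)
  fix b b' assume b: "b \<in> idx m n" "b' \<in> idx m n"
  have "(\<forall>k. 0 \<le> k \<and> k < n \<longrightarrow> a k = b k \<and> a' k = b' k) \<longleftrightarrow> b = a \<and> b' = a'"
    if "a \<in> idx m n" "a' \<in> idx m n" for a a'
    using idx_eqI[OF that(1) b(1)] idx_eqI[OF that(2) b(2)] by auto
  then show "transfer_upto m n \<psi> 0 X b b' = X b b'"
    unfolding transfer_upto_def using b by (simp add: sum_delta2)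
qed

lemma transfer_upto_Suc:
  assumes j: "j < n"
  shows "eq_on_idx m n (transfer_upto m n \<psi> (Suc j) X) (reg_transfer m \<psi> j (transfer_upto m n \<psi> j X))"
  unfolding eq_on_idx_def
proof (intro ballI)
  fix b b' assume b: "b \<in> idx m n" "b' \<in> idx m n"
  define cnd where "cnd = (\<lambda>a a'. \<forall>k. Suc j \<le> k \<and> k < n \<longrightarrow> a k = b k \<and> a' k = b' k)"
  define pp where "pp = (\<lambda>a a'. \<Prod>k<j. \<psi> (a' k, b' k) (a k, b k))"
  define G where "G = (\<lambda>a a' c c'. if cnd a a' \<and> a j = c \<and> a' j = c' then X a a' * pp a a' * \<psi> (c', b' j) (c, b j) else 0)"
  \<comment> \<open>Both sides are the sum of \<open>G\<close> over \<open>(a, a', c, c')\<close>, taken in different orders.\<close>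
  have L: "transfer_upto m n \<psi> (Suc j) X b b' = (\<Sum>a\<in>idx m n. \<Sum>a'\<in>idx m n. \<Sum>c<m. \<Sum>c'<m. G a a' c c')"
    unfolding transfer_upto_def
  proof (intro sum.cong refl)
    fix a a' assume a: "a \<in> idx m n" "a' \<in> idx m n"
    have "(\<Sum>c<m. \<Sum>c'<m. G a a' c c') = (if cnd a a' then X a a' * pp a a' * \<psi> (a' j, b' j) (a j, b j) else 0)"
    proof (cases "cnd a a'")
      case True
      have "(\<Sum>c<m. \<Sum>c'<m. G a a' c c') = (\<Sum>c<m. \<Sum>c'<m. if a j = c \<and> a' j = c' then X a a' * pp a a' * \<psi> (c', b' j) (c, b j) else 0)"
        unfolding G_def using True by simp
      also have "\<dots> = X a a' * pp a a' * \<psi> (a' j, b' j) (a j, b j)"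
        using idx_less[OF a(1) j] idx_less[OF a(2) j] by (simp add: sum_delta2)
      finally show ?thesis using True by simp
    qed (simp add: G_def)
    note eq = this
    have cnd_app: "cnd a a' = (\<forall>k. Suc j \<le> k \<and> k < n \<longrightarrow> a k = b k \<and> a' k = b' k)" by (simp add: cnd_def)
    have prS: "(\<Prod>k<Suc j. \<psi> (a' k, b' k) (a k, b k)) = pp a a' * \<psi> (a' j, b' j) (a j, b j)" by (simp add: pp_def)
    show "(if \<forall>k. Suc j \<le> k \<and> k < n \<longrightarrow> a k = b k \<and> a' k = b' k then X a a' * (\<Prod>k<Suc j. \<psi> (a' k, b' k) (a k, b k)) else 0) = (\<Sum>c<m. \<Sum>c'<m. G a a' c c')"
      unfolding eq by (simp only: cnd_app[symmetric] prS mult.assoc)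
  qed
  have R: "reg_transfer m \<psi> j (transfer_upto m n \<psi> j X) b b' = (\<Sum>c<m. \<Sum>c'<m. \<Sum>a\<in>idx m n. \<Sum>a'\<in>idx m n. G a a' c c')"
    unfolding reg_transfer_def
  proof (intro sum.cong refl)
    fix c c'
    have if_mult: "(if P then x else 0) * y = (if P then x * y else 0)" for P and x y :: complex
      by simp
    have pr: "(\<Prod>k<j. \<psi> (a' k, (b'(j:=c')) k) (a k, (b(j:=c)) k)) = pp a a'" for a a'
      unfolding pp_def by (intro prod.cong refl) auto
    have cn: "(\<forall>k. j \<le> k \<and> k < n \<longrightarrow> a k = (b(j:=c)) k \<and> a' k = (b'(j:=c')) k) \<longleftrightarrow> cnd a a' \<and> a j = c \<and> a' j = c'" for a a'
      unfolding cnd_def using j by force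
    show "transfer_upto m n \<psi> j X (b(j := c)) (b'(j := c')) * \<psi> (c', b' j) (c, b j) = (\<Sum>a\<in>idx m n. \<Sum>a'\<in>idx m n. G a a' c c')"
      unfolding transfer_upto_def G_def pr cn by (simp add: sum_distrib_right if_mult)
  qed
  show "transfer_upto m n \<psi> (Suc j) X b b' = reg_transfer m \<psi> j (transfer_upto m n \<psi> j X) b b'"
    unfolding L R by (rule sum_swap22)
qed

lemma transfer_upto_sum:
  "transfer_upto m n \<psi> j (\<lambda>a b. \<Sum>S\<in>I. g S * X S a b) b b' = (\<Sum>S\<in>I. g S * transfer_upto m n \<psi> j (X S) b b')"
proof -
  have "(if C then (\<Sum>S\<in>I. g S * X S a a') * p else 0) = (\<Sum>S\<in>I. g S * (if C then X S a a' * p else 0))"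
    for C a a' and p :: complex
    by (cases C) (simp_all add: sum_distrib_left sum_distrib_right mult_ac)
  then show ?thesis
    unfolding transfer_upto_def by (simp only: sum_distrib_left) (rule sum_swap3[symmetric])
qed

lemma corr_tr_eq_pairing: "corr_tr m n P Q \<psi> = pairing m n Q (transfer_upto m n \<psi> n P)"
proof -
  have "corr_tr m n P Q \<psi> = (\<Sum>b\<in>idx m n. \<Sum>b'\<in>idx m n. \<Sum>a\<in>idx m n. \<Sum>a'\<in>idx m n. P a a' * Q b b' * (\<Prod>k<n. \<psi> (a' k, b' k) (a k, b k)))"
    unfolding corr_tr_def by (rule sum_swap4)
  also have "\<dots> = pairing m n Q (transfer_upto m n \<psi> n P)"
    unfolding pairing_def transfer_upto_def by (simp add: sum_distrib_left mult_ac)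
  finally show ?thesis .
qed

lemma es_support_reg_transfer:
  assumes "maxmixed_A m \<psi>" "maxmixed_B m \<psi>" "k < n" "es_support m n S X"
  shows "es_support m n S (reg_transfer m \<psi> k X)"
proof -
  have "traceless_at m n j (reg_transfer m \<psi> k X)" if "j \<in> S" for j
    using that assms traceless_at_reg_transfer_same traceless_at_reg_transfer_other
    unfolding es_support_def by (cases "j = k") auto
  moreover have "trivial_at m n j (reg_transfer m \<psi> k X)" if "j \<in> {..<n} - S" for j
    using that assms trivial_at_reg_transfer_same trivial_at_reg_transfer_other
    unfolding es_support_def by (cases "j = k") auto
  ultimately show ?thesis unfolding es_support_def by blast
qed

lemma es_support_transfer_upto:
  assumes "maxmixed_A m \<psi>" "maxmixed_B m \<psi>" "S \<subseteq> {..<n}" "es_support m n S X" "j \<le> n"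
  shows "es_support m n S (transfer_upto m n \<psi> j X)"
  using \<open>j \<le> n\<close>
proof (induction j)
  case 0
  then show ?case using assms es_support_cong[OF eq_on_idx_sym[OF transfer_upto_0]] by blast
next
  case (Suc j)
  then show ?case
    using assms es_support_reg_transfer es_support_cong[OF eq_on_idx_sym[OF transfer_upto_Suc]]
    by (metis Suc_le_lessD Suc_leD)
qed

lemma frob_sq_reg_transfer_trivial_at:
  assumes "maxmixed_B m \<psi>" "trivial_at m n k X" "k < n"
  shows "frob_sq m n (reg_transfer m \<psi> k X) = (1 / real m)\<^sup>2 * frob_sq m n X"
proof -
  have "eq_on_idx m n (reg_transfer m \<psi> k X) (\<lambda>a b. X a b / of_nat m)"
    unfolding eq_on_idx_def using reg_transfer_trivial_at[OF assms] by blast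
  then show ?thesis using frob_sq_cong frob_sq_divide by metis
qed

lemma frob_sq_transfer_upto_le:
  assumes A: "maxmixed_A m \<psi>" and B: "maxmixed_B m \<psi>" and S: "S \<subseteq> {..<n}" "es_support m n S X"
    and "j \<le> n"
  shows "frob_sq m n (transfer_upto m n \<psi> j X)
           \<le> max_corr m \<psi> ^ (2 * card (S \<inter> {..<j})) * (1 / real m) ^ (2 * j) * frob_sq m n X"
  using \<open>j \<le> n\<close>
proof (induction j)
  case 0
  then show ?case using frob_sq_cong[OF transfer_upto_0] by simp
next
  case (Suc j)
  then have j: "j < n" by simp
  define Y where "Y = transfer_upto m n \<psi> j X"
  define \<rho> where "\<rho> = (if j \<in> S then max_corr m \<psi> else 1)"
  have Y: "es_support m n S Y" unfolding Y_def using es_support_transfer_upto[OF A B S] j by simp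
  have "frob_sq m n (transfer_upto m n \<psi> (Suc j) X) = frob_sq m n (reg_transfer m \<psi> j Y)"
    using frob_sq_cong[OF transfer_upto_Suc[OF j]] by (simp add: Y_def)
  also have "\<dots> \<le> (\<rho> / real m)\<^sup>2 * frob_sq m n Y"
  proof (cases "j \<in> S")
    case True
    then show ?thesis using frob_sq_reg_transfer_le[OF A j] Y by (simp add: \<rho>_def es_support_def)
  next
    case False
    then show ?thesis using frob_sq_reg_transfer_trivial_at[OF B _ j] Y j by (simp add: \<rho>_def es_support_def)
  qed
  also have "\<dots> \<le> (\<rho> / real m)\<^sup>2 * (max_corr m \<psi> ^ (2 * card (S \<inter> {..<j})) * (1 / real m) ^ (2 * j) * frob_sq m n X)"
    using Suc j by (intro mult_left_mono) (simp_all add: Y_def)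
  also have "\<dots> = max_corr m \<psi> ^ (2 * card (S \<inter> {..<Suc j})) * (1 / real m) ^ (2 * Suc j) * frob_sq m n X"
  proof (cases "j \<in> S")
    case True
    then have "S \<inter> {..<Suc j} = insert j (S \<inter> {..<j})" by auto
    then show ?thesis using True by (simp add: \<rho>_def power_divide power_mult_distrib field_simps power2_eq_square)
  next
    case False
    then have "S \<inter> {..<Suc j} = S \<inter> {..<j}" by (auto simp: less_Suc_eq)
    then show ?thesis using False by (simp add: \<rho>_def power_mult_distrib field_simps power2_eq_square)
  qed
  finally show ?case .
qed

section \<open>The noise stability bound\<close>

lemma corr_tr_sum:
  "corr_tr m n (\<lambda>a b. \<Sum>S\<in>I. f S * X S a b) (\<lambda>a b. \<Sum>T\<in>J. g T * Y T a b) \<psi>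
     = (\<Sum>S\<in>I. \<Sum>T\<in>J. f S * g T * corr_tr m n (X S) (Y T) \<psi>)"
proof -
  have "transfer_upto m n \<psi> n (\<lambda>a b. \<Sum>S\<in>I. f S * X S a b) = (\<lambda>a b. \<Sum>S\<in>I. f S * transfer_upto m n \<psi> n (X S) a b)"
    by (intro ext transfer_upto_sum)
  then show ?thesis
    unfolding corr_tr_eq_pairing[of _ _ "\<lambda>a b. \<Sum>S\<in>I. f S * X S a b"] corr_tr_eq_pairing[of _ _ "X _"]
    by (simp add: pairing_sum_left pairing_sum_right sum_distrib_left mult_ac sum.swap[of _ J])
qed

lemma corr_tr_es_support_orthogonal:
  assumes "maxmixed_A m \<psi>" "maxmixed_B m \<psi>" "S \<subseteq> {..<n}" "T \<subseteq> {..<n}" "S \<noteq> T"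
    and "es_support m n S X" "es_support m n T Y"
  shows "corr_tr m n X Y \<psi> = 0"
  using assms es_support_transfer_upto[of m \<psi> S n X n] pairing_es_support_orthogonal[of T n S]
  by (simp add: corr_tr_eq_pairing)

lemma norm_corr_tr_es_support_le:
  assumes A: "maxmixed_A m \<psi>" and B: "maxmixed_B m \<psi>" and S: "S \<subseteq> {..<n}" "es_support m n S X"
  shows "cmod (corr_tr m n X Y \<psi>)
           \<le> max_corr m \<psi> ^ card S * (1 / real m) ^ n * sqrt (frob_sq m n X) * sqrt (frob_sq m n Y)"
proof -
  let ?c = "max_corr m \<psi> ^ card S * (1 / real m) ^ n"
  have "S \<inter> {..<n} = S" using S by auto
  then have "frob_sq m n (transfer_upto m n \<psi> n X) \<le> ?c\<^sup>2 * frob_sq m n X"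
    using frob_sq_transfer_upto_le[OF A B S, of n] by (simp add: power_mult_distrib power_mult mult.commute)
  then have "sqrt (frob_sq m n (transfer_upto m n \<psi> n X)) \<le> sqrt (?c\<^sup>2 * frob_sq m n X)"
    by (rule real_sqrt_le_mono)
  also have "\<dots> = ?c * sqrt (frob_sq m n X)"
    using max_corr_nonneg by (simp add: real_sqrt_mult)
  finally have transfer: "sqrt (frob_sq m n (transfer_upto m n \<psi> n X)) \<le> ?c * sqrt (frob_sq m n X)" .
  have "cmod (corr_tr m n X Y \<psi>) \<le> sqrt (frob_sq m n Y) * sqrt (frob_sq m n (transfer_upto m n \<psi> n X))"
    unfolding corr_tr_eq_pairing by (rule norm_pairing_le)
  also have "\<dots> \<le> sqrt (frob_sq m n Y) * (?c * sqrt (frob_sq m n X))"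
    by (intro mult_left_mono transfer) (simp add: frob_sq_nonneg)
  finally show ?thesis by (simp add: mult_ac)
qed

lemma corr_tr_noise:
  assumes A: "maxmixed_A m \<psi>" and B: "maxmixed_B m \<psi>"
  shows "corr_tr m n (noise m n r P) (noise m n r Q) \<psi> =
    (\<Sum>S\<in>Pow {..<n}. complex_of_real (r ^ (2 * card S)) * corr_tr m n (es_comp m S n P) (es_comp m S n Q) \<psi>)"
proof -
  let ?c = "\<lambda>S. complex_of_real (r ^ card S)"
  have "corr_tr m n (noise m n r P) (noise m n r Q) \<psi>
      = (\<Sum>S\<in>Pow {..<n}. \<Sum>T\<in>Pow {..<n}. ?c S * ?c T * corr_tr m n (es_comp m S n P) (es_comp m T n Q) \<psi>)"
    unfolding noise_def noise_upto_es_expansion by (rule corr_tr_sum)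
  also have "\<dots> = (\<Sum>S\<in>Pow {..<n}. ?c S * ?c S * corr_tr m n (es_comp m S n P) (es_comp m S n Q) \<psi>)"
  proof (rule sum_sum_offdiag_zero)
    fix S T assume "S \<in> Pow {..<n}" "T \<in> Pow {..<n}" "S \<noteq> T"
    then show "?c S * ?c T * corr_tr m n (es_comp m S n P) (es_comp m T n Q) \<psi> = 0"
      using corr_tr_es_support_orthogonal[OF A B] es_support_es_comp by simp
  qed simp
  finally show ?thesis by (simp add: mult_2 power_add)
qed

lemma corr_tr_noise_diff:
  assumes "maxmixed_A m \<psi>" "maxmixed_B m \<psi>"
  shows "corr_tr m n P Q \<psi> - corr_tr m n (noise m n r P) (noise m n r Q) \<psi> =
    (\<Sum>S\<in>Pow {..<n} - {{}}. complex_of_real (1 - r ^ (2 * card S)) * corr_tr m n (es_comp m S n P) (es_comp m S n Q) \<psi>)"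
proof -
  have "corr_tr m n P Q \<psi> - corr_tr m n (noise m n r P) (noise m n r Q) \<psi> =
    (\<Sum>S\<in>Pow {..<n}. complex_of_real (1 - r ^ (2 * card S)) * corr_tr m n (es_comp m S n P) (es_comp m S n Q) \<psi>)"
    using corr_tr_noise[OF assms, of n 1 P Q] corr_tr_noise[OF assms, of n r P Q]
    by (simp add: noise_1 algebra_simps flip: sum_subtractf)
  also have "\<dots> = (\<Sum>S\<in>Pow {..<n} - {{}}. complex_of_real (1 - r ^ (2 * card S)) * corr_tr m n (es_comp m S n P) (es_comp m S n Q) \<psi>)"
    by (intro sum.mono_neutral_right) auto
  finally show ?thesis .
qed

lemma norm_corr_tr_noise_diff_le:
  assumes nme: "noisy_max_ent m \<psi>" and r: "0 \<le> r" "r \<le> 1" and "0 \<le> \<epsilon>"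
    and gap: "\<And>d. max_corr m \<psi> ^ d * (1 - r ^ (2 * d)) \<le> 2 * \<epsilon>"
  shows "cmod (corr_tr m n P Q \<psi> - corr_tr m n (noise m n r P) (noise m n r Q) \<psi>)
           \<le> 2 * \<epsilon> * sqrt (var_op m n P * var_op m n Q)"
proof -
  note F = noisy_max_ent_facts[OF nme]
  let ?I = "Pow {..<n} - {{}}"
  define NP where "NP S = frob_sq m n (es_comp m S n P)" for S
  define NQ where "NQ S = frob_sq m n (es_comp m S n Q)" for S
  have bound: "cmod (complex_of_real (1 - r ^ (2 * card S)) * corr_tr m n (es_comp m S n P) (es_comp m S n Q) \<psi>)
      \<le> 2 * \<epsilon> * (1 / real m) ^ n * (sqrt (NP S) * sqrt (NQ S))" if "S \<in> ?I" for S
  proof -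
    have S: "S \<subseteq> {..<n}" using that by auto
    have r2: "0 \<le> 1 - r ^ (2 * card S)" using r by (simp add: power_le_one)
    have "cmod (complex_of_real (1 - r ^ (2 * card S)) * corr_tr m n (es_comp m S n P) (es_comp m S n Q) \<psi>)
        = (1 - r ^ (2 * card S)) * cmod (corr_tr m n (es_comp m S n P) (es_comp m S n Q) \<psi>)"
      using r2 by (simp only: norm_mult norm_of_real abs_of_nonneg)
    also have "\<dots> \<le> (1 - r ^ (2 * card S)) * (max_corr m \<psi> ^ card S * (1 / real m) ^ n * sqrt (NP S) * sqrt (NQ S))"
      using norm_corr_tr_es_support_le[OF F(2,1) S es_support_es_comp[OF S]] r2
      unfolding NP_def NQ_def by (intro mult_left_mono)
    also have "\<dots> = (max_corr m \<psi> ^ card S * (1 - r ^ (2 * card S))) * ((1 / real m) ^ n * (sqrt (NP S) * sqrt (NQ S)))"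
      by (simp only: mult_ac)
    also have "\<dots> \<le> 2 * \<epsilon> * ((1 / real m) ^ n * (sqrt (NP S) * sqrt (NQ S)))"
      by (intro mult_right_mono gap) (simp add: NP_def NQ_def frob_sq_nonneg)
    finally show ?thesis by (simp only: mult_ac)
  qed
  have "cmod (corr_tr m n P Q \<psi> - corr_tr m n (noise m n r P) (noise m n r Q) \<psi>)
      \<le> (\<Sum>S\<in>?I. 2 * \<epsilon> * (1 / real m) ^ n * (sqrt (NP S) * sqrt (NQ S)))"
    unfolding corr_tr_noise_diff[OF F(2,1)] by (intro order_trans[OF norm_sum] sum_mono bound)
  also have "\<dots> = 2 * \<epsilon> * (1 / real m) ^ n * (\<Sum>S\<in>?I. sqrt (NP S) * sqrt (NQ S))"
    by (simp add: sum_distrib_left)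
  also have "\<dots> \<le> 2 * \<epsilon> * (1 / real m) ^ n * (sqrt (\<Sum>S\<in>?I. NP S) * sqrt (\<Sum>S\<in>?I. NQ S))"
    using \<open>0 \<le> \<epsilon>\<close> by (intro mult_left_mono sum_sqrt_mult_le) (simp_all add: NP_def NQ_def frob_sq_nonneg)
  also have "\<dots> = 2 * \<epsilon> * sqrt (var_op m n P * var_op m n Q)"
    using F(3) by (simp add: var_op_eq_sum_es_comp NP_def NQ_def real_sqrt_mult real_sqrt_divide power_one_over)
  finally show ?thesis .
qed

lemma norm_corr_tr_noise_diff_le_gamma_bound:
  assumes "noisy_max_ent m \<psi>" "0 < \<epsilon>" "\<epsilon> < 1" "0 \<le> \<gamma>" "\<gamma> \<le> gamma_bound (max_corr m \<psi>) \<epsilon>"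
  shows "cmod (corr_tr m n P Q \<psi> - corr_tr m n (noise m n (1 - \<gamma>) P) (noise m n (1 - \<gamma>) Q) \<psi>)
           \<le> 2 * \<epsilon> * sqrt (var_op m n P * var_op m n Q)"
proof -
  have \<rho>: "0 \<le> max_corr m \<psi>" "max_corr m \<psi> < 1"
    using max_corr_nonneg noisy_max_ent_facts(4)[OF assms(1)] .
  then have "\<gamma> \<le> \<epsilon>" using gamma_bound_le_eps assms by (meson order_trans)
  then show ?thesis
    using assms \<rho> noise_gap_le_of_gamma_bound by (intro norm_corr_tr_noise_diff_le) auto
qed

lemma norm_corr_tr_noise_diff_le_log_rate:
  assumes "noisy_max_ent m \<psi>" "0 < \<epsilon>" "\<epsilon> < 1" "\<gamma> \<le> 1"
    and \<gamma>: "\<gamma> = (1 - max_corr m \<psi>) * \<epsilon> / (2 * ln (1 / \<epsilon>))"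
  shows "cmod (corr_tr m n P Q \<psi> - corr_tr m n (noise m n (1 - \<gamma>) P) (noise m n (1 - \<gamma>) Q) \<psi>)
           \<le> 2 * \<epsilon> * sqrt (var_op m n P * var_op m n Q)"
proof -
  have \<rho>: "0 \<le> max_corr m \<psi>" "max_corr m \<psi> < 1"
    using max_corr_nonneg noisy_max_ent_facts(4)[OF assms(1)] .
  then have "0 \<le> \<gamma>" using assms by simp
  then show ?thesis
    using assms \<rho> noise_gap_le_of_log_rate by (intro norm_corr_tr_noise_diff_le) auto
qed

theorem lemma6p2:
  shows "(\<forall>(m::nat) (n::nat) (\<psi>::op2) (\<epsilon>::real) (P::opn) (Q::opn) (\<gamma>::real).
            noisy_max_ent m \<psi> \<and> 0 < \<epsilon> \<and> \<epsilon> < 1 \<and>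
            hermitian_op m n P \<and> hermitian_op m n Q \<and>
            0 \<le> \<gamma> \<and> \<gamma> \<le> gamma_bound (max_corr m \<psi>) \<epsilon> \<longrightarrow>
            cmod (corr_tr m n P Q \<psi>
                  - corr_tr m n (noise m n (1 - \<gamma>) P) (noise m n (1 - \<gamma>) Q) \<psi>)
              \<le> 2 * \<epsilon> * sqrt (var_op m n P * var_op m n Q))
       \<and> (\<exists>C::real. C > 0 \<and>
           (\<forall>(m::nat) (n::nat) (\<psi>::op2) (\<epsilon>::real) (P::opn) (Q::opn).
              let \<gamma> = C * (1 - max_corr m \<psi>) * \<epsilon> / ln (1 / \<epsilon>) in
              noisy_max_ent m \<psi> \<and> 0 < \<epsilon> \<and> \<epsilon> < 1 \<and>
              hermitian_op m n P \<and> hermitian_op m n Q \<and> \<gamma> \<le> 1 \<longrightarrow>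
              cmod (corr_tr m n P Q \<psi>
                    - corr_tr m n (noise m n (1 - \<gamma>) P) (noise m n (1 - \<gamma>) Q) \<psi>)
                \<le> 2 * \<epsilon> * sqrt (var_op m n P * var_op m n Q)))"
proof (intro conjI allI impI exI[of _ "1/2"])
  show "\<And>m n \<psi> \<epsilon> P Q \<gamma>. noisy_max_ent m \<psi> \<and> 0 < \<epsilon> \<and> \<epsilon> < 1 \<and> hermitian_op m n P \<and> hermitian_op m n Q \<and>
      0 \<le> \<gamma> \<and> \<gamma> \<le> gamma_bound (max_corr m \<psi>) \<epsilon> \<Longrightarrow>
      cmod (corr_tr m n P Q \<psi> - corr_tr m n (noise m n (1 - \<gamma>) P) (noise m n (1 - \<gamma>) Q) \<psi>)
        \<le> 2 * \<epsilon> * sqrt (var_op m n P * var_op m n Q)"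
    using norm_corr_tr_noise_diff_le_gamma_bound by blast
  show "\<And>m n \<psi> \<epsilon> P Q. let \<gamma> = 1/2 * (1 - max_corr m \<psi>) * \<epsilon> / ln (1 / \<epsilon>) in
      noisy_max_ent m \<psi> \<and> 0 < \<epsilon> \<and> \<epsilon> < 1 \<and> hermitian_op m n P \<and> hermitian_op m n Q \<and> \<gamma> \<le> 1 \<longrightarrow>
      cmod (corr_tr m n P Q \<psi> - corr_tr m n (noise m n (1 - \<gamma>) P) (noise m n (1 - \<gamma>) Q) \<psi>)
        \<le> 2 * \<epsilon> * sqrt (var_op m n P * var_op m n Q)"
    unfolding Let_def using norm_corr_tr_noise_diff_le_log_rate by auto
qed simp

end
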